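(* Let $(X,d)$ be a metric space, $\mu$ a non-atomic Borel measure on $X$, $m$ a Borel measure on $X$, $1\le p<\infty$, and let $\Gamma^*\subset\Gamma^\mu$ be a family of paths closed under taking non-trivial subpaths such that any two points of $X$ are joined by a path in $\Gamma^*$. Then the generalized Newton–Sobolev space $N^{1,p}$ (defined with respect to $\mu$, $m$ and $\Gamma^*$), equipped with $\|\cdot\|_{N^{1,p}}$, is a Banach space.
   Context: A path is a continuous map $\gamma:[a,b]\to X$; a subpath is a restriction of $\gamma$ to a subinterval $[c,e]\subset[a,b]$, trivial if $c=e$; $\mathrm{Im}(\gamma)=\gamma([a,b])$. $\mu$ non-atomic means $\mu(\{x\})=0$ for all $x$. $\Gamma^\mu$ is the set of all non-trivial injective paths $\gamma$ in $X$ such that $0<\mu(\mathrm{Im}(\tilde\gamma))<\infty$ for every non-trivial subpath $\tilde\gamma$ of $\gamma$. For a Borel $g:X\to[0,\infty]$ and $\gamma\in\Gamma^\mu$, $\int_\gamma g:=\int_{\mathrm{Im}(\gamma)}g\,d\mu$. For a family $\Gamma\subset\Gamma^*$, its $p$-modulus is $\mathrm{Mod}_p(\Gamma)=\inf\int_X g^p\,dm$, the infimum over all Borel $g:X\to[0,\infty]$ with $\int_\gamma g\ge1$ for all $\gamma\in\Gamma$; a property holds for $p$-almost every path of $\Gamma^*$ if the set of paths in $\Gamma^*$ where it fails has $p$-modulus zero. A Borel function $\rho\ge0$ is a $p$-weak upper gradient of $f:X\to[-\infty,\infty]$ if $|f(x)-f(y)|\le\int_\gamma\rho$ for $p$-almost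 every $\gamma\in\Gamma^*$, where $x,y$ are the endpoints of $\gamma$. $\tilde N^{1,p}$ is the space of functions $f\in L^p(m)$ having a $p$-weak upper gradient in $L^p(m)$, with $\|f\|_{N^{1,p}}=\|f\|_{L^p(m)}+\inf_\rho\|\rho\|_{L^p(m)}$, the infimum over all $p$-weak upper gradients $\rho$ of $f$. $N^{1,p}$ is the quotient of $\tilde N^{1,p}$ by the relation $f\sim g\iff\|f-g\|_{N^{1,p}}=0$. *)

theory Defs
  imports "HOL-Analysis.Analysis"
begin

definition enn_powr :: "ennreal \<Rightarrow> real \<Rightarrow> ennreal" where
  "enn_powr x q = (if x = \<infinity> then \<infinity> else ennreal (enn2real x powr q))"

text \<open>A path gamma on [a,b] is represented by the triple (a, b, gamma); only the
  values of gamma on [a,b] matter.\<close>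
type_synonym 'a path_triple = "real \<times> real \<times> (real \<Rightarrow> 'a)"

definition path_image3 :: "'a path_triple \<Rightarrow> 'a set" where
  "path_image3 P = (case P of (a, b, g) \<Rightarrow> g ` {a..b})"

definition start3 :: "'a path_triple \<Rightarrow> 'a" where
  "start3 P = (case P of (a, b, g) \<Rightarrow> g a)"

definition end3 :: "'a path_triple \<Rightarrow> 'a" where
  "end3 P = (case P of (a, b, g) \<Rightarrow> g b)"

definition Gamma_mu :: "'a::metric_space measure \<Rightarrow> 'a path_triple set" where
  "Gamma_mu \<mu> = {(a, b, g). a < b \<and> continuous_on {a..b} g \<and> inj_on g {a..b} \<and>
      (\<forall>c e. a \<le> c \<and> c < e \<and> e \<le> b \<longrightarrow>
          0 < emeasure \<mu> (g ` {c..e}) \<and> emeasure \<mu> (g ` {c..e}) < \<infinity>)}"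

text \<open>Line integral of g along a path: the mu-integral over its image.\<close>
definition path_int :: "'a::metric_space measure \<Rightarrow> 'a path_triple \<Rightarrow> ('a \<Rightarrow> ennreal) \<Rightarrow> ennreal" where
  "path_int \<mu> P g = (\<integral>\<^sup>+ x. g x * indicator (path_image3 P) x \<partial>\<mu>)"

definition Mod_p :: "'a::metric_space measure \<Rightarrow> 'a measure \<Rightarrow> real \<Rightarrow> 'a path_triple set \<Rightarrow> ennreal" where
  "Mod_p \<mu> m p \<Gamma> = (INF g \<in> {g. g \<in> borel_measurable borel \<and> (\<forall>P\<in>\<Gamma>. 1 \<le> path_int \<mu> P g)}.
       \<integral>\<^sup>+ x. enn_powr (g x) p \<partial>m)"

definition p_ae_path :: "'a::metric_space measure \<Rightarrow> 'a measure \<Rightarrow> real \<Rightarrow> 'a path_triple set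
    \<Rightarrow> ('a path_triple \<Rightarrow> bool) \<Rightarrow> bool" where
  "p_ae_path \<mu> m p \<Gamma>s Q \<longleftrightarrow> Mod_p \<mu> m p {P \<in> \<Gamma>s. \<not> Q P} = 0"

text \<open>Upper gradient inequality |f x - f y| \<le> int_gamma rho, with the convention that
  the left side is infinite whenever f x or f y is infinite.\<close>
definition ug_ineq :: "('a \<Rightarrow> ereal) \<Rightarrow> 'a \<Rightarrow> 'a \<Rightarrow> ennreal \<Rightarrow> bool" where
  "ug_ineq f x y I \<longleftrightarrow>
     (if \<bar>f x\<bar> \<noteq> \<infinity> \<and> \<bar>f y\<bar> \<noteq> \<infinity>
      then ennreal (\<bar>real_of_ereal (f x) - real_of_ereal (f y)\<bar>) \<le> I
      else I = \<infinity>)"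

definition p_weak_ug :: "'a::metric_space measure \<Rightarrow> 'a measure \<Rightarrow> real \<Rightarrow> 'a path_triple set
    \<Rightarrow> ('a \<Rightarrow> ereal) \<Rightarrow> ('a \<Rightarrow> ennreal) \<Rightarrow> bool" where
  "p_weak_ug \<mu> m p \<Gamma>s f \<rho> \<longleftrightarrow> \<rho> \<in> borel_measurable borel \<and>
     p_ae_path \<mu> m p \<Gamma>s (\<lambda>P. ug_ineq f (start3 P) (end3 P) (path_int \<mu> P \<rho>))"

definition Lp_norm_enn :: "'a measure \<Rightarrow> real \<Rightarrow> ('a \<Rightarrow> ennreal) \<Rightarrow> ennreal" where
  "Lp_norm_enn m p g = enn_powr (\<integral>\<^sup>+ x. enn_powr (g x) p \<partial>m) (1 / p)"

definition Lp_norm_ereal :: "'a measure \<Rightarrow> real \<Rightarrow> ('a \<Rightarrow> ereal) \<Rightarrow> ennreal" where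
  "Lp_norm_ereal m p f = Lp_norm_enn m p (\<lambda>x. e2ennreal \<bar>f x\<bar>)"

definition N1p_tilde :: "'a::metric_space measure \<Rightarrow> 'a measure \<Rightarrow> real \<Rightarrow> 'a path_triple set
    \<Rightarrow> ('a \<Rightarrow> ereal) set" where
  "N1p_tilde \<mu> m p \<Gamma>s = {f. f \<in> borel_measurable m \<and> Lp_norm_ereal m p f < \<infinity> \<and>
      (\<exists>\<rho>. p_weak_ug \<mu> m p \<Gamma>s f \<rho> \<and> Lp_norm_enn m p \<rho> < \<infinity>)}"

definition N1p_norm :: "'a::metric_space measure \<Rightarrow> 'a measure \<Rightarrow> real \<Rightarrow> 'a path_triple set
    \<Rightarrow> ('a \<Rightarrow> ereal) \<Rightarrow> ennreal" where
  "N1p_norm \<mu> m p \<Gamma>s f = Lp_norm_ereal m p f +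
      (INF \<rho> \<in> {\<rho>. p_weak_ug \<mu> m p \<Gamma>s f \<rho>}. Lp_norm_enn m p \<rho>)"

end

theory Submission
  imports Defs
begin

text \<open>The algebraic part is inherited from \<open>L\<^sup>p(m)\<close> through Minkowski's inequality, once
  \<open>p\<close>-exceptional path families are recognised (Fuglede) as those along which some \<open>L\<^sup>p\<close>
  function has infinite integral; such families are closed under countable unions.

  For completeness, pass to a subsequence \<open>v\<^sub>k\<close> of the Cauchy sequence whose differences
  \<open>v\<^sub>k\<^sub>+\<^sub>1 - v\<^sub>k\<close> have norm and weak upper gradients \<open>R\<^sub>k\<close> of norm at most \<open>2\<^sup>-\<^sup>k\<close>. The
  telescoping series converges absolutely off an \<open>m\<close>-null set \<open>E\<close> and defines the limit \<open>f\<close>.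
  Discard the exceptional family of paths that violate one of the upper gradient inequalities on
  a subpath, along which \<open>\<Sum> R\<^sub>k\<close> has infinite integral, or which meet \<open>E\<close> in positive
  \<open>\<mu>\<close>-measure. Any other path has a point outside \<open>E\<close>, and moving along subpaths the
  series stays convergent up to both endpoints; so \<open>\<Sum>\<^sub>i\<^sub>\<ge>\<^sub>k R\<^sub>i\<close> is an upper gradient of
  \<open>v\<^sub>k - f\<close> along it, whence \<open>v\<^sub>k \<rightarrow> f\<close> in \<open>N\<^sup>1\<^sup>,\<^sup>p\<close>.\<close>

section \<open>Real powers of extended nonnegative reals\<close>

lemma enn_powr_ennreal: "0 \<le> r \<Longrightarrow> enn_powr (ennreal r) q = ennreal (r powr q)"
  by (simp add: enn_powr_def)

lemma enn_powr_top [simp]: "enn_powr top q = top"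
  by (simp add: enn_powr_def)

lemma enn_powr_0 [simp]: "enn_powr 0 q = 0"
  by (simp add: enn_powr_def)

lemma enn_powr_mono:
  assumes "0 \<le> q" "x \<le> y"
  shows "enn_powr x q \<le> enn_powr y q"
proof (cases y)
  case (real b)
  then obtain a where "x = ennreal a" "0 \<le> a" "a \<le> b"
    using assms by (cases x) (auto simp: ennreal_le_iff top_unique)
  then show ?thesis
    using real assms by (simp add: enn_powr_ennreal powr_mono2)
qed simp

lemma enn_powr_powr_inverse: "q \<noteq> 0 \<Longrightarrow> enn_powr (enn_powr x q) (1/q) = x"
  by (cases x) (simp_all add: enn_powr_ennreal powr_powr)

lemma enn_powr_inverse_powr: "q \<noteq> 0 \<Longrightarrow> enn_powr (enn_powr x (1/q)) q = x"
  using enn_powr_powr_inverse[of "1/q" x] by simp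

lemma enn_powr_eq_0_iff: "q \<noteq> 0 \<Longrightarrow> enn_powr x q = 0 \<longleftrightarrow> x = 0"
  by (cases x) (auto simp: enn_powr_ennreal)

lemma enn_powr_eq_top_iff [simp]: "enn_powr x q = top \<longleftrightarrow> x = top"
  by (cases x) (auto simp: enn_powr_ennreal)

lemma enn_powr_le_iff:
  assumes "0 < q"
  shows "enn_powr x q \<le> enn_powr y q \<longleftrightarrow> x \<le> y"
proof
  assume "enn_powr x q \<le> enn_powr y q"
  then have "enn_powr (enn_powr x q) (1/q) \<le> enn_powr (enn_powr y q) (1/q)"
    using assms by (rule_tac enn_powr_mono) auto
  then show "x \<le> y"
    using assms enn_powr_powr_inverse[of q x] enn_powr_powr_inverse[of q y] by simp
qed (use assms in \<open>auto intro: enn_powr_mono\<close>)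

lemma enn_powr_le_iff_le_powr_inverse:
  "0 < q \<Longrightarrow> enn_powr x q \<le> y \<longleftrightarrow> x \<le> enn_powr y (1/q)"
  using enn_powr_le_iff[of q x "enn_powr y (1/q)"] by (simp add: enn_powr_inverse_powr)

lemma enn_powr_mult:
  assumes q: "0 < q"
  shows "enn_powr (x * y) q = enn_powr x q * enn_powr y q"
proof (cases x)
  case (real a)
  show ?thesis
  proof (cases y)
    case (real b)
    with \<open>x = ennreal a\<close> \<open>0 \<le> a\<close> q show ?thesis
      by (simp add: enn_powr_ennreal ennreal_mult[symmetric] powr_mult)
  next
    case top
    with \<open>x = ennreal a\<close> \<open>0 \<le> a\<close> q show ?thesis
      by (cases "a = 0") (auto simp: enn_powr_ennreal ennreal_mult_top)
  qed
next
  case top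
  with q show ?thesis
    by (cases "y = 0") (auto simp: ennreal_top_mult enn_powr_eq_0_iff)
qed

lemma enn_powr_SUP:
  assumes q: "0 < q"
  shows "enn_powr (SUP i\<in>I. f i) q = (SUP i\<in>I. enn_powr (f i) q)"
proof (rule antisym)
  have "f i \<le> enn_powr (SUP i\<in>I. enn_powr (f i) q) (1/q)" if "i \<in> I" for i
    using q that by (subst enn_powr_le_iff_le_powr_inverse[symmetric]) (auto intro: SUP_upper)
  then show "enn_powr (SUP i\<in>I. f i) q \<le> (SUP i\<in>I. enn_powr (f i) q)"
    using q by (simp add: enn_powr_le_iff_le_powr_inverse SUP_least)
  show "(SUP i\<in>I. enn_powr (f i) q) \<le> enn_powr (SUP i\<in>I. f i) q"
    using q by (intro SUP_least enn_powr_mono) (auto intro: SUP_upper)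
qed

lemma measurable_enn_powr [measurable]:
  assumes f: "f \<in> borel_measurable M"
  shows "(\<lambda>x. enn_powr (f x) q) \<in> borel_measurable M"
proof -
  have "{x \<in> space M. f x = top} \<in> sets M"
    using f by measurable
  moreover have "(\<lambda>x. ennreal (enn2real (f x) powr q)) \<in> borel_measurable M"
    using f by measurable
  ultimately show ?thesis
    unfolding enn_powr_def infinity_ennreal_def by (intro measurable_If) auto
qed

section \<open>Minkowski's inequality\<close>

lemma convex_powr_nonneg:
  fixes p u v t :: real
  assumes p: "1 \<le> p" and uv: "0 \<le> u" "0 \<le> v" and t: "0 \<le> t" "t \<le> 1"
  shows "(t * u + (1 - t) * v) powr p \<le> t * u powr p + (1 - t) * v powr p"
proof -
  have scaled: "(s * z) powr p \<le> s * z powr p" if "0 \<le> s" "s \<le> 1" "0 \<le> z" for s z :: real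
  proof -
    have "(s * z) powr p = s powr p * z powr p"
      using that by (simp add: powr_mult)
    also have "\<dots> \<le> s powr 1 * z powr p"
      using that p by (intro mult_right_mono powr_mono') auto
    finally show ?thesis
      using that by simp
  qed
  consider "u = 0" | "v = 0" | "0 < u" "0 < v"
    using uv by linarith
  then show ?thesis
  proof cases
    case 1
    then show ?thesis using scaled[of "1 - t" v] t uv p by simp
  next
    case 2
    then show ?thesis using scaled[of t u] t uv p by simp
  next
    case 3
    from convex_onD[OF powr_convex[OF p], of "1 - t" u v] 3 t
    show ?thesis by (simp add: algebra_simps)
  qed
qed

lemma powr_add_le_weighted:
  fixes p x y a b :: real
  assumes p: "1 \<le> p" and xy: "0 \<le> x" "0 \<le> y" and ab: "0 < a" "0 < b"
  shows "(x + y) powr p \<le> ((a + b) / a) powr (p - 1) * x powr p + ((a + b) / b) powr (p - 1) * y powr p"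
proof -
  define t where "t = a / (a + b)"
  have t: "0 \<le> t" "t \<le> 1" "1 - t = b / (a + b)"
    using ab by (auto simp: t_def field_simps)
  have "t * (x / a) + (1 - t) * (y / b) = (x + y) / (a + b)"
    using ab t(3) by (simp add: t_def add_divide_distrib)
  then have "((x + y) / (a + b)) powr p \<le> t * (x / a) powr p + (1 - t) * (y / b) powr p"
    using convex_powr_nonneg[OF p, of "x / a" "y / b" t] t xy ab by simp
  then have "(x + y) powr p / (a + b) powr p \<le> t * (x powr p / a powr p) + (1 - t) * (y powr p / b powr p)"
    using xy ab by (simp add: powr_divide)
  then have "(x + y) powr p \<le> (a + b) powr p * (t * (x powr p / a powr p) + (1 - t) * (y powr p / b powr p))"
    using ab by (simp add: divide_le_eq mult.commute)
  also have "\<dots> = ((a + b) powr p * t / a powr p) * x powr p + ((a + b) powr p * (1 - t) / b powr p) * y powr p"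
    by (simp add: algebra_simps)
  also have "(a + b) powr p * t / a powr p = ((a + b) / a) powr (p - 1)"
    using ab by (simp add: t_def powr_diff powr_divide field_simps)
  also have "(a + b) powr p * (1 - t) / b powr p = ((a + b) / b) powr (p - 1)"
    unfolding t(3) using ab by (simp add: powr_diff powr_divide field_simps)
  finally show ?thesis .
qed

lemma powr_weights_sum:
  fixes a b p :: real
  assumes "0 < a" "0 < b"
  shows "((a + b) / a) powr (p - 1) * a powr p + ((a + b) / b) powr (p - 1) * b powr p = (a + b) powr p"
proof -
  have "((a + b) / a) powr (p - 1) * a powr p = (a + b) powr (p - 1) * a"
    "((a + b) / b) powr (p - 1) * b powr p = (a + b) powr (p - 1) * b"
    using assms by (simp_all add: powr_divide powr_diff)
  moreover have "(a + b) powr p = (a + b) powr (p - 1) * (a + b)"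
    using assms by (simp add: powr_diff)
  ultimately show ?thesis
    by (simp add: algebra_simps)
qed

lemma enn_powr_add_le_weighted:
  assumes p: "1 \<le> p" and ab: "0 < a" "0 < b"
  shows "enn_powr (x + y) p \<le>
    ennreal (((a + b) / a) powr (p - 1)) * enn_powr x p + ennreal (((a + b) / b) powr (p - 1)) * enn_powr y p"
proof (cases x; cases y)
  fix u v assume uv: "0 \<le> u" "x = ennreal u" "0 \<le> v" "y = ennreal v"
  then show ?thesis
    using powr_add_le_weighted[OF p, of u v a b] ab
    by (simp add: enn_powr_ennreal ennreal_mult[symmetric] ennreal_plus[symmetric] del: ennreal_plus)
qed (use ab in \<open>simp_all add: ennreal_mult_top\<close>)

lemma Lp_norm_enn_le_iff:
  "0 < p \<Longrightarrow> Lp_norm_enn m p g \<le> c \<longleftrightarrow> (\<integral>\<^sup>+x. enn_powr (g x) p \<partial>m) \<le> enn_powr c p"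
  unfolding Lp_norm_enn_def using enn_powr_le_iff_le_powr_inverse[of "1/p"] by simp

lemma enn_powr_Lp_norm_enn:
  "0 < p \<Longrightarrow> enn_powr (Lp_norm_enn m p g) p = (\<integral>\<^sup>+x. enn_powr (g x) p \<partial>m)"
  unfolding Lp_norm_enn_def by (simp add: enn_powr_inverse_powr)

lemma Lp_norm_enn_mono_AE:
  "0 < p \<Longrightarrow> AE x in m. f x \<le> g x \<Longrightarrow> Lp_norm_enn m p f \<le> Lp_norm_enn m p g"
  unfolding Lp_norm_enn_def
  by (intro enn_powr_mono nn_integral_mono_AE) (auto elim!: eventually_mono intro: enn_powr_mono)

lemma Lp_norm_enn_mono:
  "0 < p \<Longrightarrow> (\<And>x. f x \<le> g x) \<Longrightarrow> Lp_norm_enn m p f \<le> Lp_norm_enn m p g"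
  by (rule Lp_norm_enn_mono_AE) auto

lemma Lp_norm_enn_cong_AE:
  "AE x in m. f x = g x \<Longrightarrow> Lp_norm_enn m p f = Lp_norm_enn m p g"
  unfolding Lp_norm_enn_def
  by (subst nn_integral_cong_AE[where v="\<lambda>x. enn_powr (g x) p"]) (auto elim!: eventually_mono)

lemma Lp_norm_enn_zero [simp]: "Lp_norm_enn m p (\<lambda>x. 0) = 0"
  unfolding Lp_norm_enn_def by simp

lemma Lp_norm_enn_cmult:
  "0 < p \<Longrightarrow> g \<in> borel_measurable m \<Longrightarrow> Lp_norm_enn m p (\<lambda>x. c * g x) = c * Lp_norm_enn m p g"
  unfolding Lp_norm_enn_def
  by (simp add: enn_powr_mult nn_integral_cmult enn_powr_powr_inverse)

lemma Lp_norm_enn_eq_0_AE: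
  "0 < p \<Longrightarrow> g \<in> borel_measurable m \<Longrightarrow> Lp_norm_enn m p g = 0 \<Longrightarrow> AE x in m. g x = 0"
  unfolding Lp_norm_enn_def
  by (subst (asm) enn_powr_eq_0_iff)
     (auto simp: nn_integral_0_iff_AE enn_powr_eq_0_iff elim!: eventually_mono)

lemma Lp_norm_enn_finite_AE:
  assumes "0 < p" "g \<in> borel_measurable m" "Lp_norm_enn m p g < top"
  shows "AE x in m. g x < top"
proof -
  have "(\<integral>\<^sup>+x. enn_powr (g x) p \<partial>m) \<noteq> \<infinity>"
    using assms(3) by (simp add: Lp_norm_enn_def less_top[symmetric])
  from nn_integral_PInf_AE[OF _ this] assms(2) show ?thesis
    by (auto simp: less_top[symmetric] elim!: eventually_mono)
qed

lemma Lp_norm_enn_add_le: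
  assumes p: "1 \<le> p" and f: "f \<in> borel_measurable m" and g: "g \<in> borel_measurable m"
  shows "Lp_norm_enn m p (\<lambda>x. f x + g x) \<le> Lp_norm_enn m p f + Lp_norm_enn m p g"
proof -
  have p0: "0 < p" using p by simp
  let ?A = "Lp_norm_enn m p f" and ?B = "Lp_norm_enn m p g"
  consider "?A = top" | "?B = top" | "?A = 0" | "?B = 0" | "?A \<noteq> top" "?B \<noteq> top" "?A \<noteq> 0" "?B \<noteq> 0"
    by blast
  then show ?thesis
  proof cases
    case 3
    then have "AE x in m. f x = 0" using Lp_norm_enn_eq_0_AE[OF p0 f] by simp
    then have "Lp_norm_enn m p (\<lambda>x. f x + g x) = ?B"
      by (intro Lp_norm_enn_cong_AE) (auto elim!: eventually_mono)
    then show ?thesis by simp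
  next
    case 4
    then have "AE x in m. g x = 0" using Lp_norm_enn_eq_0_AE[OF p0 g] by simp
    then have "Lp_norm_enn m p (\<lambda>x. f x + g x) = ?A"
      by (intro Lp_norm_enn_cong_AE) (auto elim!: eventually_mono)
    then show ?thesis by simp
  next
    case 5
    then obtain a b where ab: "?A = ennreal a" "?B = ennreal b" "0 < a" "0 < b"
      by (cases ?A; cases ?B) auto
    let ?K1 = "((a + b) / a) powr (p - 1)" and ?K2 = "((a + b) / b) powr (p - 1)"
    \<comment> \<open>the weights are chosen so that the pointwise bound is sharp at \<open>f/A = g/B\<close>\<close>
    have "(\<integral>\<^sup>+x. enn_powr (f x + g x) p \<partial>m) \<le>
          (\<integral>\<^sup>+x. ennreal ?K1 * enn_powr (f x) p + ennreal ?K2 * enn_powr (g x) p \<partial>m)"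
      using ab by (intro nn_integral_mono enn_powr_add_le_weighted p)
    also have "\<dots> = ennreal ?K1 * enn_powr ?A p + ennreal ?K2 * enn_powr ?B p"
      using f g p0 by (simp add: nn_integral_add nn_integral_cmult enn_powr_Lp_norm_enn)
    also have "\<dots> = ennreal (?K1 * a powr p + ?K2 * b powr p)"
      using ab by (simp add: enn_powr_ennreal ennreal_plus[symmetric] ennreal_mult[symmetric] del: ennreal_plus)
    also have "?K1 * a powr p + ?K2 * b powr p = (a + b) powr p"
      using ab(3,4) by (rule powr_weights_sum)
    also have "ennreal ((a + b) powr p) = enn_powr (?A + ?B) p"
      using ab by (simp add: enn_powr_ennreal ennreal_plus[symmetric] del: ennreal_plus)
    finally show ?thesis using p0 by (simp add: Lp_norm_enn_le_iff)
  qed auto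
qed

lemma Lp_norm_enn_sum_le:
  assumes p: "1 \<le> p" and g: "\<And>i. g i \<in> borel_measurable m"
  shows "Lp_norm_enn m p (\<lambda>x. \<Sum>i<(n::nat). g i x) \<le> (\<Sum>i<n. Lp_norm_enn m p (g i))"
proof (induction n)
  case (Suc n)
  have "Lp_norm_enn m p (\<lambda>x. \<Sum>i<Suc n. g i x) \<le> Lp_norm_enn m p (\<lambda>x. \<Sum>i<n. g i x) + Lp_norm_enn m p (g n)"
    using g by (simp add: Lp_norm_enn_add_le p)
  also have "\<dots> \<le> (\<Sum>i<Suc n. Lp_norm_enn m p (g i))"
    using Suc by simp
  finally show ?case .
qed simp

lemma Lp_norm_enn_suminf_le:
  assumes p: "1 \<le> p" and g: "\<And>i. g i \<in> borel_measurable m"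
  shows "Lp_norm_enn m p (\<lambda>x. \<Sum>i. g i x) \<le> (\<Sum>i. Lp_norm_enn m p (g i))"
proof -
  have p0: "0 < p" "0 < 1/p" using p by auto
  have inc: "incseq (\<lambda>n x. enn_powr (\<Sum>i<n. g i x) p)"
    unfolding incseq_def le_fun_def using p0 by (auto intro!: enn_powr_mono sum_mono2)
  have "Lp_norm_enn m p (\<lambda>x. \<Sum>i. g i x) =
        enn_powr (\<integral>\<^sup>+x. (SUP n. enn_powr (\<Sum>i<n. g i x) p) \<partial>m) (1/p)"
    unfolding Lp_norm_enn_def suminf_eq_SUP using p0 by (simp add: enn_powr_SUP)
  also have "\<dots> = (SUP n. Lp_norm_enn m p (\<lambda>x. \<Sum>i<n. g i x))"
    unfolding Lp_norm_enn_def using g p0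
    by (simp add: nn_integral_monotone_convergence_SUP[OF inc] enn_powr_SUP)
  also have "\<dots> \<le> (SUP n. \<Sum>i<n. Lp_norm_enn m p (g i))"
    by (intro SUP_mono) (auto intro!: Lp_norm_enn_sum_le p g)
  also have "\<dots> = (\<Sum>i. Lp_norm_enn m p (g i))"
    by (simp add: suminf_eq_SUP)
  finally show ?thesis .
qed

lemma Lp_norm_enn_suminf_geometric_le:
  assumes "1 \<le> p" "\<And>i. g i \<in> borel_measurable m" "\<And>i. Lp_norm_enn m p (g i) \<le> ennreal ((1/2)^i)"
  shows "Lp_norm_enn m p (\<lambda>x. \<Sum>i. g (i + k) x) \<le> ennreal (2 * (1/2)^k)"
proof -
  have "(\<lambda>i. (1/2::real)^(i + k)) sums (2 * (1/2)^k)"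
    using sums_mult[OF geometric_sums[of "1/2::real"], of "(1/2)^k"]
    by (simp add: power_add mult_ac)
  then have geom: "(\<Sum>i. ennreal ((1/2)^(i + k))) = ennreal (2 * (1/2)^k)"
    by (subst suminf_ennreal_eq) auto
  have "Lp_norm_enn m p (\<lambda>x. \<Sum>i. g (i + k) x) \<le> (\<Sum>i. Lp_norm_enn m p (g (i + k)))"
    using assms by (intro Lp_norm_enn_suminf_le)
  also have "\<dots> \<le> (\<Sum>i. ennreal ((1/2)^(i + k)))"
    using assms by (intro suminf_le) auto
  finally show ?thesis by (simp only: geom)
qed

lemma ennreal_le_suminf: "(f :: nat \<Rightarrow> ennreal) i \<le> (\<Sum>j. f j)"
proof -
  have "f i \<le> (\<Sum>j<Suc i. f j)" by (intro member_le_sum) auto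
  also have "\<dots> \<le> (\<Sum>j. f j)" by (intro sum_le_suminf) auto
  finally show ?thesis .
qed

section \<open>Path integrals and exceptional path families\<close>

locale newton_sobolev =
  fixes \<mu> m :: "'a::metric_space measure" and p :: real and \<Gamma>s :: "'a path_triple set"
  assumes sets_mu: "sets \<mu> = sets borel"
    and sets_m: "sets m = sets borel"
    and p: "1 \<le> p"
    and paths_Gamma_mu: "\<Gamma>s \<subseteq> Gamma_mu \<mu>"
    and subpath_closed: "\<And>a b g c e. (a, b, g) \<in> \<Gamma>s \<Longrightarrow> a \<le> c \<Longrightarrow> c < e \<Longrightarrow> e \<le> b
                           \<Longrightarrow> (c, e, g) \<in> \<Gamma>s"
begin

lemma p_pos: "0 < p"
  using p by simp

lemma space_m: "space m = UNIV"
  using sets_eq_imp_space_eq[OF sets_m] by simp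

lemma measurable_m_iff_borel: "g \<in> borel_measurable m \<longleftrightarrow> g \<in> borel_measurable borel"
  by (simp add: measurable_cong_sets[OF sets_m refl])

lemma borel_measurable_m: "g \<in> borel_measurable borel \<Longrightarrow> g \<in> borel_measurable m"
  by (simp add: measurable_m_iff_borel)

lemma borel_measurable_mu: "g \<in> borel_measurable borel \<Longrightarrow> g \<in> borel_measurable \<mu>"
  by (simp add: measurable_cong_sets[OF sets_mu refl])

lemma path_image_sets:
  assumes "P \<in> \<Gamma>s"
  shows "path_image3 P \<in> sets \<mu>"
proof -
  obtain a b g where P: "P = (a, b, g)" by (cases P)
  with assms paths_Gamma_mu have "0 < emeasure \<mu> (g ` {a..b})"
    by (auto simp: Gamma_mu_def)
  then show ?thesis
    using emeasure_notin_sets by (fastforce simp: P path_image3_def)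
qed

lemma path_int_mono: "(\<And>x. f x \<le> g x) \<Longrightarrow> path_int \<mu> P f \<le> path_int \<mu> P g"
  unfolding path_int_def by (intro nn_integral_mono mult_right_mono) auto

lemma path_int_mono_image: "path_image3 P \<subseteq> path_image3 Q \<Longrightarrow> path_int \<mu> P f \<le> path_int \<mu> Q f"
  unfolding path_int_def by (intro nn_integral_mono mult_left_mono) (auto split: split_indicator)

lemma measurable_path_integrand:
  fixes f :: "'a \<Rightarrow> ennreal"
  assumes "P \<in> \<Gamma>s" "f \<in> borel_measurable borel"
  shows "(\<lambda>x. f x * indicator (path_image3 P) x) \<in> borel_measurable \<mu>"
proof -
  have [measurable]: "f \<in> borel_measurable \<mu>" "path_image3 P \<in> sets \<mu>"
    using assms by (auto intro: borel_measurable_mu path_image_sets)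
  show ?thesis by measurable
qed

lemma path_int_add:
  "P \<in> \<Gamma>s \<Longrightarrow> f \<in> borel_measurable borel \<Longrightarrow> g \<in> borel_measurable borel \<Longrightarrow>
    path_int \<mu> P (\<lambda>x. f x + g x) = path_int \<mu> P f + path_int \<mu> P g"
  unfolding path_int_def using measurable_path_integrand[of P f] measurable_path_integrand[of P g]
  by (simp add: distrib_right nn_integral_add)

lemma path_int_cmult:
  "P \<in> \<Gamma>s \<Longrightarrow> f \<in> borel_measurable borel \<Longrightarrow> path_int \<mu> P (\<lambda>x. c * f x) = c * path_int \<mu> P f"
  unfolding path_int_def using measurable_path_integrand[of P f]
  by (simp add: mult.assoc nn_integral_cmult)

lemma path_int_suminf:
  assumes "P \<in> \<Gamma>s" "\<And>i. f i \<in> borel_measurable borel"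
  shows "path_int \<mu> P (\<lambda>x. \<Sum>i. f i x) = (\<Sum>i. path_int \<mu> P (f i))"
proof -
  have "path_int \<mu> P (\<lambda>x. \<Sum>i. f i x) = (\<integral>\<^sup>+x. (\<Sum>i. f i x * indicator (path_image3 P) x) \<partial>\<mu>)"
    by (simp add: path_int_def)
  also have "\<dots> = (\<Sum>i. path_int \<mu> P (f i))"
    unfolding path_int_def by (intro nn_integral_suminf measurable_path_integrand assms)
  finally show ?thesis .
qed

text \<open>Fuglede's characterisation of path families of \<open>p\<close>-modulus zero: some
  \<open>L\<^sup>p\<close> function has infinite integral along each of the paths.\<close>

definition null_paths :: "'a path_triple set \<Rightarrow> bool" where
  "null_paths \<Gamma> \<longleftrightarrow>
     (\<exists>g\<in>borel_measurable borel. Lp_norm_enn m p g < top \<and> (\<forall>P\<in>\<Gamma>. path_int \<mu> P g = top))"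

lemma null_paths_subset: "\<Gamma>1 \<subseteq> \<Gamma>2 \<Longrightarrow> null_paths \<Gamma>2 \<Longrightarrow> null_paths \<Gamma>1"
  unfolding null_paths_def by blast

lemma null_paths_empty: "null_paths {}"
  unfolding null_paths_def by (intro bexI[of _ "\<lambda>x. 0"]) auto

lemma null_paths_Un:
  assumes "null_paths A" "null_paths B"
  shows "null_paths (A \<union> B)"
proof -
  obtain f g where
    f: "f \<in> borel_measurable borel" "Lp_norm_enn m p f < top" "\<forall>P\<in>A. path_int \<mu> P f = top" and
    g: "g \<in> borel_measurable borel" "Lp_norm_enn m p g < top" "\<forall>P\<in>B. path_int \<mu> P g = top"
    using assms unfolding null_paths_def by blast
  have "Lp_norm_enn m p (\<lambda>x. f x + g x) \<le> Lp_norm_enn m p f + Lp_norm_enn m p g"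
    using f g by (intro Lp_norm_enn_add_le p borel_measurable_m) auto
  also have "\<dots> < top" using f g by simp
  finally have "Lp_norm_enn m p (\<lambda>x. f x + g x) < top" .
  moreover have "path_int \<mu> P (\<lambda>x. f x + g x) = top" if "P \<in> A \<union> B" for P
    using that f g path_int_mono[of f "\<lambda>x. f x + g x" P] path_int_mono[of g "\<lambda>x. f x + g x" P]
    by (auto simp: top_unique)
  ultimately show ?thesis
    unfolding null_paths_def using f g by (intro bexI[of _ "\<lambda>x. f x + g x"]) auto
qed

lemma null_paths_superpaths:
  assumes "null_paths A" "\<And>P. P \<in> B \<Longrightarrow> \<exists>Q\<in>A. path_image3 Q \<subseteq> path_image3 P"
  shows "null_paths B"
proof -
  obtain g where g: "g \<in> borel_measurable borel" "Lp_norm_enn m p g < top" "\<forall>P\<in>A. path_int \<mu> P g = top"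
    using assms(1) unfolding null_paths_def by blast
  have "path_int \<mu> P g = top" if P: "P \<in> B" for P
  proof -
    obtain Q where "Q \<in> A" "path_image3 Q \<subseteq> path_image3 P"
      using assms(2)[OF P] by blast
    then show ?thesis
      using g path_int_mono_image[of Q P g] by (auto simp: top_unique)
  qed
  then show ?thesis
    unfolding null_paths_def using g by blast
qed

lemma null_paths_small_norm:
  assumes "\<Gamma> \<subseteq> \<Gamma>s" "null_paths \<Gamma>" "0 < e"
  shows "\<exists>g\<in>borel_measurable borel. Lp_norm_enn m p g \<le> ennreal e \<and> (\<forall>P\<in>\<Gamma>. path_int \<mu> P g = top)"
proof -
  obtain g where g: "g \<in> borel_measurable borel" "Lp_norm_enn m p g < top" "\<forall>P\<in>\<Gamma>. path_int \<mu> P g = top"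
    using assms unfolding null_paths_def by blast
  then obtain L where L: "Lp_norm_enn m p g = ennreal L" "0 \<le> L"
    by (cases "Lp_norm_enn m p g") auto
  define c where "c = e / (L + 1)"
  have c: "0 < c" using L assms by (simp add: c_def)
  have "Lp_norm_enn m p (\<lambda>x. ennreal c * g x) = ennreal (c * L)"
    using g L c by (simp add: Lp_norm_enn_cmult p_pos borel_measurable_m ennreal_mult)
  also have "\<dots> \<le> ennreal e"
    using L assms by (intro ennreal_leI) (simp add: c_def field_simps)
  finally show ?thesis
    using assms(1) g c
    by (intro bexI[of _ "\<lambda>x. ennreal c * g x"]) (auto simp: path_int_cmult ennreal_mult_top subset_iff)
qed

lemma null_paths_UN:
  assumes "\<And>i::nat. \<Gamma> i \<subseteq> \<Gamma>s" "\<And>i. null_paths (\<Gamma> i)"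
  shows "null_paths (\<Union>i. \<Gamma> i)"
proof -
  have "\<forall>i. \<exists>g\<in>borel_measurable borel. Lp_norm_enn m p g \<le> ennreal ((1/2)^i) \<and> (\<forall>P\<in>\<Gamma> i. path_int \<mu> P g = top)"
    using assms by (intro allI null_paths_small_norm) auto
  then obtain G where G: "\<And>i. G i \<in> borel_measurable borel" "\<And>i. Lp_norm_enn m p (G i) \<le> ennreal ((1/2)^i)"
      "\<And>i P. P \<in> \<Gamma> i \<Longrightarrow> path_int \<mu> P (G i) = top"
    by metis
  have "Lp_norm_enn m p (\<lambda>x. \<Sum>i. G i x) \<le> ennreal 2"
    using Lp_norm_enn_suminf_geometric_le[OF p borel_measurable_m, of G 0] G by simp
  then have "Lp_norm_enn m p (\<lambda>x. \<Sum>i. G i x) < top"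
    by (simp add: le_less_trans)
  moreover have "path_int \<mu> P (\<lambda>x. \<Sum>i. G i x) = top" if "P \<in> \<Gamma> i" for P i
  proof -
    have "path_int \<mu> P (G i) \<le> path_int \<mu> P (\<lambda>x. \<Sum>i. G i x)"
      by (intro path_int_mono ennreal_le_suminf)
    then show ?thesis
      using G(3)[OF that] by (simp add: top_unique)
  qed
  ultimately show ?thesis
    unfolding null_paths_def using G by (intro bexI[of _ "\<lambda>x. \<Sum>i. G i x"]) auto
qed

lemma null_paths_imp_Mod_p_eq_0:
  assumes "\<Gamma> \<subseteq> \<Gamma>s" "null_paths \<Gamma>"
  shows "Mod_p \<mu> m p \<Gamma> = 0"
proof -
  have "Mod_p \<mu> m p \<Gamma> \<le> 0 + ennreal e" if e: "0 < e" for e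
  proof -
    obtain g where g: "g \<in> borel_measurable borel" "Lp_norm_enn m p g \<le> ennreal (e powr (1/p))"
      "\<forall>P\<in>\<Gamma>. path_int \<mu> P g = top"
      using null_paths_small_norm[OF assms, of "e powr (1/p)"] e by auto
    have "Mod_p \<mu> m p \<Gamma> \<le> (\<integral>\<^sup>+x. enn_powr (g x) p \<partial>m)"
      unfolding Mod_p_def using g by (intro INF_lower) auto
    also have "\<dots> \<le> enn_powr (ennreal (e powr (1/p))) p"
      using g(2) Lp_norm_enn_le_iff[OF p_pos] by blast
    also have "\<dots> = ennreal e"
      using e p_pos by (simp add: enn_powr_ennreal powr_powr)
    finally show ?thesis by simp
  qed
  then have "Mod_p \<mu> m p \<Gamma> \<le> 0"
    by (rule ennreal_le_epsilon) simp
  then show ?thesis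
    by simp
qed

lemma Mod_p_eq_0_imp_null_paths:
  assumes "\<Gamma> \<subseteq> \<Gamma>s" and Mod0: "Mod_p \<mu> m p \<Gamma> = 0"
  shows "null_paths \<Gamma>"
proof -
  have "\<exists>g\<in>borel_measurable borel. (\<forall>P\<in>\<Gamma>. 1 \<le> path_int \<mu> P g) \<and> Lp_norm_enn m p g \<le> ennreal ((1/2)^i)"
    for i :: nat
  proof -
    have "Mod_p \<mu> m p \<Gamma> < enn_powr (ennreal ((1/2)^i)) p"
      using Mod0 p_pos by (simp add: enn_powr_ennreal)
    then obtain g where "g \<in> borel_measurable borel" "\<forall>P\<in>\<Gamma>. 1 \<le> path_int \<mu> P g"
      "(\<integral>\<^sup>+x. enn_powr (g x) p \<partial>m) < enn_powr (ennreal ((1/2)^i)) p"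
      unfolding Mod_p_def INF_less_iff by auto
    then show ?thesis
      using Lp_norm_enn_le_iff[OF p_pos, of m g] by auto
  qed
  then obtain G where G: "\<And>i. G i \<in> borel_measurable borel" "\<And>i P. P \<in> \<Gamma> \<Longrightarrow> 1 \<le> path_int \<mu> P (G i)"
     "\<And>i. Lp_norm_enn m p (G i) \<le> ennreal ((1/2)^i)"
    by metis
  have "Lp_norm_enn m p (\<lambda>x. \<Sum>i. G i x) \<le> ennreal 2"
    using Lp_norm_enn_suminf_geometric_le[OF p borel_measurable_m, of G 0] G by simp
  then have "Lp_norm_enn m p (\<lambda>x. \<Sum>i. G i x) < top"
    by (simp add: le_less_trans)
  moreover have "path_int \<mu> P (\<lambda>x. \<Sum>i. G i x) = top" if P: "P \<in> \<Gamma>" for P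
  proof -
    have "(SUP n. of_nat n :: ennreal) = (\<Sum>i. 1)"
      by (simp add: suminf_eq_SUP)
    also have "\<dots> \<le> (\<Sum>i. path_int \<mu> P (G i))"
      using G P by (intro suminf_le) auto
    also have "\<dots> = path_int \<mu> P (\<lambda>x. \<Sum>i. G i x)"
      using P assms G by (intro path_int_suminf[symmetric]) auto
    finally show ?thesis
      by (simp add: ennreal_SUP_of_nat_eq_top top_unique)
  qed
  ultimately show ?thesis
    unfolding null_paths_def using G by (intro bexI[of _ "\<lambda>x. \<Sum>i. G i x"]) auto
qed

lemma Mod_p_eq_0_iff_null_paths: "\<Gamma> \<subseteq> \<Gamma>s \<Longrightarrow> Mod_p \<mu> m p \<Gamma> = 0 \<longleftrightarrow> null_paths \<Gamma>"
  using null_paths_imp_Mod_p_eq_0 Mod_p_eq_0_imp_null_paths by blast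

lemma p_weak_ug_iff_null_paths:
  "p_weak_ug \<mu> m p \<Gamma>s f \<rho> \<longleftrightarrow> \<rho> \<in> borel_measurable borel \<and>
    null_paths {P\<in>\<Gamma>s. \<not> ug_ineq f (start3 P) (end3 P) (path_int \<mu> P \<rho>)}"
  unfolding p_weak_ug_def p_ae_path_def by (subst Mod_p_eq_0_iff_null_paths) auto

end

section \<open>Upper gradients\<close>

lemma ug_ineq_top: "ug_ineq f x y top"
  unfolding ug_ineq_def by simp

lemma ug_ineqD:
  assumes "ug_ineq f x y I" "I < top"
  shows "\<bar>f x\<bar> \<noteq> \<infinity>" "\<bar>f y\<bar> \<noteq> \<infinity>"
    "ennreal \<bar>real_of_ereal (f x) - real_of_ereal (f y)\<bar> \<le> I"
  using assms unfolding ug_ineq_def by (auto split: if_splits)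

lemma ug_ineqI:
  "\<bar>f x\<bar> \<noteq> \<infinity> \<Longrightarrow> \<bar>f y\<bar> \<noteq> \<infinity> \<Longrightarrow> ennreal \<bar>real_of_ereal (f x) - real_of_ereal (f y)\<bar> \<le> I
   \<Longrightarrow> ug_ineq f x y I"
  unfolding ug_ineq_def by simp

text \<open>The sum \<open>h = h1 + h2\<close> need only be prescribed where both summands are finite:
  elsewhere the convention of \<open>ug_ineq\<close> already forces the right-hand side to be infinite.\<close>

lemma ug_ineq_add:
  assumes h: "\<And>z. \<bar>h1 z\<bar> \<noteq> \<infinity> \<Longrightarrow> \<bar>h2 z\<bar> \<noteq> \<infinity> \<Longrightarrow> h z = h1 z + h2 z"
    and u1: "ug_ineq h1 x y I1" and u2: "ug_ineq h2 x y I2"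
  shows "ug_ineq h x y (I1 + I2)"
proof (cases "I1 < top \<and> I2 < top")
  case True
  then have f1: "\<bar>h1 x\<bar> \<noteq> \<infinity>" "\<bar>h1 y\<bar> \<noteq> \<infinity>" "ennreal \<bar>real_of_ereal (h1 x) - real_of_ereal (h1 y)\<bar> \<le> I1"
    and f2: "\<bar>h2 x\<bar> \<noteq> \<infinity>" "\<bar>h2 y\<bar> \<noteq> \<infinity>" "ennreal \<bar>real_of_ereal (h2 x) - real_of_ereal (h2 y)\<bar> \<le> I2"
    using ug_ineqD[OF u1] ug_ineqD[OF u2] by auto
  obtain a1 b1 a2 b2 where r: "h1 x = ereal a1" "h1 y = ereal b1" "h2 x = ereal a2" "h2 y = ereal b2"
    using f1 f2 by (metis ereal_real')
  have "ennreal \<bar>(a1 + a2) - (b1 + b2)\<bar> \<le> ennreal \<bar>a1 - b1\<bar> + ennreal \<bar>a2 - b2\<bar>"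
    by (simp add: ennreal_plus[symmetric] del: ennreal_plus)
  also have "\<dots> \<le> I1 + I2"
    using f1(3) f2(3) r by (intro add_mono) auto
  finally show ?thesis
    using h[of x] h[of y] r f1 f2 by (intro ug_ineqI) auto
next
  case False
  then show ?thesis
    by (auto simp: not_less top_unique ug_ineq_top)
qed

lemma ug_ineq_cmult:
  assumes "ug_ineq f x y I"
  shows "ug_ineq (\<lambda>z. ereal c * f z) x y (ennreal \<bar>c\<bar> * I)"
proof (cases "I < top")
  case True
  then have f: "\<bar>f x\<bar> \<noteq> \<infinity>" "\<bar>f y\<bar> \<noteq> \<infinity>" "ennreal \<bar>real_of_ereal (f x) - real_of_ereal (f y)\<bar> \<le> I"
    using ug_ineqD[OF assms] by auto
  obtain a b where r: "f x = ereal a" "f y = ereal b"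
    using f by (metis ereal_real')
  have "ennreal \<bar>c * a - c * b\<bar> = ennreal \<bar>c\<bar> * ennreal \<bar>a - b\<bar>"
    by (simp add: ennreal_mult[symmetric] abs_mult[symmetric] right_diff_distrib)
  also have "\<dots> \<le> ennreal \<bar>c\<bar> * I"
    using f(3) r by (intro mult_left_mono) auto
  finally show ?thesis
    using r by (intro ug_ineqI) auto
next
  case False
  then have "I = top"
    by (simp add: less_top[symmetric])
  then show ?thesis
    by (cases "c = 0") (simp_all add: ug_ineq_def zero_ereal_def[symmetric] ennreal_mult_top)
qed

context newton_sobolev
begin

lemma p_weak_ug_measurable: "p_weak_ug \<mu> m p \<Gamma>s f \<rho> \<Longrightarrow> \<rho> \<in> borel_measurable m"
  by (auto simp: p_weak_ug_iff_null_paths intro: borel_measurable_m)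

lemma p_weak_ug_add:
  assumes u1: "p_weak_ug \<mu> m p \<Gamma>s h1 \<rho>1" and u2: "p_weak_ug \<mu> m p \<Gamma>s h2 \<rho>2"
    and h: "\<And>z. \<bar>h1 z\<bar> \<noteq> \<infinity> \<Longrightarrow> \<bar>h2 z\<bar> \<noteq> \<infinity> \<Longrightarrow> h z = h1 z + h2 z"
  shows "p_weak_ug \<mu> m p \<Gamma>s h (\<lambda>x. \<rho>1 x + \<rho>2 x)"
proof -
  have m1: "\<rho>1 \<in> borel_measurable borel" and m2: "\<rho>2 \<in> borel_measurable borel"
    using u1 u2 by (auto simp: p_weak_ug_iff_null_paths)
  have "ug_ineq h (start3 P) (end3 P) (path_int \<mu> P (\<lambda>x. \<rho>1 x + \<rho>2 x))"
    if "P \<in> \<Gamma>s" "ug_ineq h1 (start3 P) (end3 P) (path_int \<mu> P \<rho>1)"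
       "ug_ineq h2 (start3 P) (end3 P) (path_int \<mu> P \<rho>2)" for P
    using ug_ineq_add[OF h that(2,3)] path_int_add[OF that(1) m1 m2] by simp
  then have "{P\<in>\<Gamma>s. \<not> ug_ineq h (start3 P) (end3 P) (path_int \<mu> P (\<lambda>x. \<rho>1 x + \<rho>2 x))} \<subseteq>
        {P\<in>\<Gamma>s. \<not> ug_ineq h1 (start3 P) (end3 P) (path_int \<mu> P \<rho>1)} \<union>
        {P\<in>\<Gamma>s. \<not> ug_ineq h2 (start3 P) (end3 P) (path_int \<mu> P \<rho>2)}"
    by blast
  then show ?thesis
    using u1 u2 m1 m2 unfolding p_weak_ug_iff_null_paths by (auto intro: null_paths_subset null_paths_Un)
qed

lemma p_weak_ug_cmult:
  assumes "p_weak_ug \<mu> m p \<Gamma>s f \<rho>"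
  shows "p_weak_ug \<mu> m p \<Gamma>s (\<lambda>z. ereal c * f z) (\<lambda>x. ennreal \<bar>c\<bar> * \<rho> x)"
proof -
  have m: "\<rho> \<in> borel_measurable borel"
    using assms by (auto simp: p_weak_ug_iff_null_paths)
  have "ug_ineq (\<lambda>z. ereal c * f z) (start3 P) (end3 P) (path_int \<mu> P (\<lambda>x. ennreal \<bar>c\<bar> * \<rho> x))"
    if "P \<in> \<Gamma>s" "ug_ineq f (start3 P) (end3 P) (path_int \<mu> P \<rho>)" for P
    using ug_ineq_cmult[OF that(2), of c] path_int_cmult[OF that(1) m] by simp
  then have "{P\<in>\<Gamma>s. \<not> ug_ineq (\<lambda>z. ereal c * f z) (start3 P) (end3 P) (path_int \<mu> P (\<lambda>x. ennreal \<bar>c\<bar> * \<rho> x))}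
      \<subseteq> {P\<in>\<Gamma>s. \<not> ug_ineq f (start3 P) (end3 P) (path_int \<mu> P \<rho>)}"
    by blast
  then show ?thesis
    using assms m unfolding p_weak_ug_iff_null_paths by (auto intro: null_paths_subset)
qed

lemma p_weak_ug_zero: "p_weak_ug \<mu> m p \<Gamma>s (\<lambda>x. 0) (\<lambda>x. 0)"
proof -
  have "{P\<in>\<Gamma>s. \<not> ug_ineq (\<lambda>x. 0) (start3 P) (end3 P) (path_int \<mu> P (\<lambda>x. 0))} = {}"
    by (auto simp: ug_ineq_def)
  then show ?thesis
    unfolding p_weak_ug_iff_null_paths using null_paths_empty by (simp only:) simp
qed

end

section \<open>The \<open>N\<^sup>1\<^sup>,\<^sup>p\<close> seminorm\<close>

lemma ennreal_mult_INF:
  assumes d: "0 < d"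
  shows "ennreal d * (INF i\<in>I. f i) = (INF i\<in>I. ennreal d * f i)"
proof (rule antisym)
  show "ennreal d * (INF i\<in>I. f i) \<le> (INF i\<in>I. ennreal d * f i)"
    by (intro INF_greatest mult_left_mono INF_lower) auto
  have cancel: "ennreal d * (ennreal (1/d) * x) = x" "ennreal (1/d) * (ennreal d * x) = x" for x
    using d by (simp_all add: mult.assoc[symmetric] ennreal_mult[symmetric])
  have "ennreal (1/d) * (INF i\<in>I. ennreal d * f i) \<le> (INF i\<in>I. f i)"
  proof (rule INF_greatest)
    fix i assume "i \<in> I"
    then have "ennreal (1/d) * (INF i\<in>I. ennreal d * f i) \<le> ennreal (1/d) * (ennreal d * f i)"
      by (intro mult_left_mono INF_lower) auto
    then show "ennreal (1/d) * (INF i\<in>I. ennreal d * f i) \<le> f i"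
      by (simp only: cancel)
  qed
  then have "ennreal d * (ennreal (1/d) * (INF i\<in>I. ennreal d * f i)) \<le> ennreal d * (INF i\<in>I. f i)"
    by (intro mult_left_mono) auto
  then show "(INF i\<in>I. ennreal d * f i) \<le> ennreal d * (INF i\<in>I. f i)"
    by (simp only: cancel)
qed

lemma ennreal_le_add_INF_INF:
  fixes f :: "'b \<Rightarrow> ennreal" and g :: "'c \<Rightarrow> ennreal"
  assumes N: "\<And>a b. a \<in> A \<Longrightarrow> b \<in> B \<Longrightarrow> N \<le> c + f a + g b"
  shows "N \<le> c + (INF a\<in>A. f a) + (INF b\<in>B. g b)"
proof (rule ennreal_le_epsilon)
  fix e :: real
  assume lt: "c + (INF a\<in>A. f a) + (INF b\<in>B. g b) < top" and e: "0 < e"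
  have "(INF a\<in>A. f a) \<le> c + (INF a\<in>A. f a) + (INF b\<in>B. g b)"
    by (metis add.commute add.left_commute le_iff_add)
  moreover have "(INF b\<in>B. g b) \<le> c + (INF a\<in>A. f a) + (INF b\<in>B. g b)"
    by (metis add.commute le_iff_add)
  ultimately have I1: "(INF a\<in>A. f a) \<noteq> \<infinity>" and I2: "(INF b\<in>B. g b) \<noteq> \<infinity>"
    using lt by (simp_all only: infinity_ennreal_def less_top)
  obtain a where a: "a \<in> A" "f a < (INF a\<in>A. f a) + ennreal (e/2)"
    using INF_approx_ennreal[OF _ refl I1, of "e/2"] e by auto
  obtain b where b: "b \<in> B" "g b < (INF b\<in>B. g b) + ennreal (e/2)"
    using INF_approx_ennreal[OF _ refl I2, of "e/2"] e by auto
  have "N \<le> c + f a + g b"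
    using N a b by auto
  also have "\<dots> \<le> c + ((INF a\<in>A. f a) + ennreal (e/2)) + ((INF b\<in>B. g b) + ennreal (e/2))"
    using a b by (intro add_mono order_refl less_imp_le)
  also have "\<dots> = c + (INF a\<in>A. f a) + (INF b\<in>B. g b) + ennreal e"
    using e by (simp add: ac_simps ennreal_plus[symmetric] del: ennreal_plus)
  finally show "N \<le> c + (INF a\<in>A. f a) + (INF b\<in>B. g b) + ennreal e" .
qed

lemma ereal_abs_diff_triangle: "\<bar>a - c\<bar> \<le> \<bar>a - b\<bar> + \<bar>b - (c::ereal)\<bar>"
  by (cases a; cases b; cases c) auto

lemma ereal_diff_split: "\<bar>a - b\<bar> \<noteq> \<infinity> \<Longrightarrow> \<bar>b - c\<bar> \<noteq> \<infinity> \<Longrightarrow> a - c = (a - b) + (b - (c::ereal))"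
  by (cases a; cases b; cases c) auto

lemma e2ennreal_add: "0 \<le> a \<Longrightarrow> 0 \<le> b \<Longrightarrow> e2ennreal (a + b) = e2ennreal a + e2ennreal b"
  by (cases a; cases b) (auto simp: ennreal_plus[symmetric] simp del: ennreal_plus)

context newton_sobolev
begin

lemma Lp_norm_ereal_le_add:
  assumes "h1 \<in> borel_measurable m" "h2 \<in> borel_measurable m"
    and le: "\<And>x. \<bar>h x\<bar> \<le> \<bar>h1 x\<bar> + \<bar>h2 x\<bar>"
  shows "Lp_norm_ereal m p h \<le> Lp_norm_ereal m p h1 + Lp_norm_ereal m p h2"
proof -
  have "Lp_norm_ereal m p h \<le> Lp_norm_enn m p (\<lambda>x. e2ennreal \<bar>h1 x\<bar> + e2ennreal \<bar>h2 x\<bar>)"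
    unfolding Lp_norm_ereal_def using e2ennreal_mono[OF le]
    by (intro Lp_norm_enn_mono p_pos) (simp add: e2ennreal_add)
  also have "\<dots> \<le> Lp_norm_ereal m p h1 + Lp_norm_ereal m p h2"
    unfolding Lp_norm_ereal_def using assms
    by (intro Lp_norm_enn_add_le p) (auto intro!: measurable_compose[OF _ measurable_e2ennreal])
  finally show ?thesis .
qed

lemma Lp_norm_ereal_cmult:
  assumes "f \<in> borel_measurable m"
  shows "Lp_norm_ereal m p (\<lambda>x. ereal c * f x) = ennreal \<bar>c\<bar> * Lp_norm_ereal m p f"
proof -
  have "e2ennreal \<bar>ereal c * f x\<bar> = ennreal \<bar>c\<bar> * e2ennreal \<bar>f x\<bar>" for x
    by (cases "f x"; cases "c = 0")
       (auto simp: abs_mult ennreal_mult ennreal_mult_top zero_ereal_def[symmetric] e2ennreal_neg)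
  then show ?thesis
    unfolding Lp_norm_ereal_def using assms p_pos by (simp add: Lp_norm_enn_cmult)
qed

lemma N1p_norm_le: "p_weak_ug \<mu> m p \<Gamma>s f \<rho> \<Longrightarrow> N1p_norm \<mu> m p \<Gamma>s f \<le> Lp_norm_ereal m p f + Lp_norm_enn m p \<rho>"
  unfolding N1p_norm_def by (intro add_left_mono INF_lower) auto

lemma N1p_norm_le_add:
  assumes "h1 \<in> borel_measurable m" "h2 \<in> borel_measurable m"
    and le: "\<And>x. \<bar>h x\<bar> \<le> \<bar>h1 x\<bar> + \<bar>h2 x\<bar>"
    and add: "\<And>z. \<bar>h1 z\<bar> \<noteq> \<infinity> \<Longrightarrow> \<bar>h2 z\<bar> \<noteq> \<infinity> \<Longrightarrow> h z = h1 z + h2 z"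
  shows "N1p_norm \<mu> m p \<Gamma>s h \<le> N1p_norm \<mu> m p \<Gamma>s h1 + N1p_norm \<mu> m p \<Gamma>s h2"
proof -
  let ?C = "Lp_norm_ereal m p h1 + Lp_norm_ereal m p h2"
  have "N1p_norm \<mu> m p \<Gamma>s h \<le> ?C + Lp_norm_enn m p \<rho>1 + Lp_norm_enn m p \<rho>2"
    if "p_weak_ug \<mu> m p \<Gamma>s h1 \<rho>1" "p_weak_ug \<mu> m p \<Gamma>s h2 \<rho>2" for \<rho>1 \<rho>2
  proof -
    have "N1p_norm \<mu> m p \<Gamma>s h \<le> Lp_norm_ereal m p h + Lp_norm_enn m p (\<lambda>x. \<rho>1 x + \<rho>2 x)"
      using that by (intro N1p_norm_le p_weak_ug_add[OF _ _ add])
    also have "\<dots> \<le> ?C + (Lp_norm_enn m p \<rho>1 + Lp_norm_enn m p \<rho>2)"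
      using that assms
      by (intro add_mono Lp_norm_ereal_le_add Lp_norm_enn_add_le p p_weak_ug_measurable) auto
    finally show ?thesis by (simp add: ac_simps)
  qed
  then have "N1p_norm \<mu> m p \<Gamma>s h \<le> ?C + (INF \<rho>\<in>{\<rho>. p_weak_ug \<mu> m p \<Gamma>s h1 \<rho>}. Lp_norm_enn m p \<rho>)
      + (INF \<rho>\<in>{\<rho>. p_weak_ug \<mu> m p \<Gamma>s h2 \<rho>}. Lp_norm_enn m p \<rho>)"
    by (intro ennreal_le_add_INF_INF) auto
  then show ?thesis
    unfolding N1p_norm_def by (simp add: ac_simps)
qed

lemma N1p_norm_diff_triangle:
  assumes "f \<in> borel_measurable m" "g \<in> borel_measurable m" "h \<in> borel_measurable m"
  shows "N1p_norm \<mu> m p \<Gamma>s (\<lambda>x. f x - h x)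
    \<le> N1p_norm \<mu> m p \<Gamma>s (\<lambda>x. f x - g x) + N1p_norm \<mu> m p \<Gamma>s (\<lambda>x. g x - h x)"
proof (rule N1p_norm_le_add)
  show "(\<lambda>x. f x - g x) \<in> borel_measurable m" "(\<lambda>x. g x - h x) \<in> borel_measurable m"
    using assms by measurable
  show "\<bar>f x - h x\<bar> \<le> \<bar>f x - g x\<bar> + \<bar>g x - h x\<bar>" for x
    by (rule ereal_abs_diff_triangle)
  show "f x - h x = (f x - g x) + (g x - h x)" if "\<bar>f x - g x\<bar> \<noteq> \<infinity>" "\<bar>g x - h x\<bar> \<noteq> \<infinity>" for x
    using that by (rule ereal_diff_split)
qed

lemma Lp_norm_ereal_zero [simp]: "Lp_norm_ereal m p (\<lambda>x. 0) = 0"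
  by (simp add: Lp_norm_ereal_def zero_ereal_def)

lemma N1p_norm_zero: "N1p_norm \<mu> m p \<Gamma>s (\<lambda>x. 0) = 0"
  using N1p_norm_le[OF p_weak_ug_zero] by simp

lemma N1p_norm_cmult:
  assumes f: "f \<in> borel_measurable m"
  shows "N1p_norm \<mu> m p \<Gamma>s (\<lambda>x. ereal c * f x) = ennreal \<bar>c\<bar> * N1p_norm \<mu> m p \<Gamma>s f"
proof (cases "c = 0")
  case True
  then show ?thesis
    using N1p_norm_zero by (simp add: zero_ereal_def[symmetric])
next
  case False
  let ?U = "{\<rho>. p_weak_ug \<mu> m p \<Gamma>s f \<rho>}" and ?V = "{\<rho>. p_weak_ug \<mu> m p \<Gamma>s (\<lambda>x. ereal c * f x) \<rho>}"
  have V: "?V = (\<lambda>\<rho> x. ennreal \<bar>c\<bar> * \<rho> x) ` ?U"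
  proof (intro equalityI subsetI)
    fix \<rho> assume "\<rho> \<in> ?V"
    then have "p_weak_ug \<mu> m p \<Gamma>s (\<lambda>z. ereal (1/c) * (ereal c * f z)) (\<lambda>x. ennreal \<bar>1/c\<bar> * \<rho> x)"
      by (intro p_weak_ug_cmult) auto
    moreover have "ereal (1/c) * (ereal c * a) = a" for a
      using False by (simp add: mult.assoc[symmetric] one_ereal_def[symmetric])
    ultimately have "(\<lambda>x. ennreal \<bar>1/c\<bar> * \<rho> x) \<in> ?U"
      by simp
    moreover have "\<rho> = (\<lambda>x. ennreal \<bar>c\<bar> * (ennreal \<bar>1/c\<bar> * \<rho> x))"
      using False by (simp add: mult.assoc[symmetric] ennreal_mult[symmetric] abs_mult[symmetric])
    ultimately show "\<rho> \<in> (\<lambda>\<rho> x. ennreal \<bar>c\<bar> * \<rho> x) ` ?U"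
      by (intro image_eqI[where x="\<lambda>x. ennreal \<bar>1/c\<bar> * \<rho> x"])
  qed (auto intro: p_weak_ug_cmult)
  have "(INF \<rho>\<in>?V. Lp_norm_enn m p \<rho>) = (INF \<rho>\<in>?U. Lp_norm_enn m p (\<lambda>x. ennreal \<bar>c\<bar> * \<rho> x))"
    unfolding V image_image ..
  also have "\<dots> = (INF \<rho>\<in>?U. ennreal \<bar>c\<bar> * Lp_norm_enn m p \<rho>)"
    by (intro INF_cong refl Lp_norm_enn_cmult p_pos p_weak_ug_measurable) auto
  also have "\<dots> = ennreal \<bar>c\<bar> * (INF \<rho>\<in>?U. Lp_norm_enn m p \<rho>)"
    using False by (simp add: ennreal_mult_INF)
  finally show ?thesis
    unfolding N1p_norm_def using f by (simp add: Lp_norm_ereal_cmult distrib_left)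
qed

lemma N1p_tilde_zero: "(\<lambda>x. 0) \<in> N1p_tilde \<mu> m p \<Gamma>s"
  unfolding N1p_tilde_def using p_weak_ug_zero by auto

lemma N1p_tilde_cmult:
  assumes "f \<in> N1p_tilde \<mu> m p \<Gamma>s"
  shows "(\<lambda>x. ereal c * f x) \<in> N1p_tilde \<mu> m p \<Gamma>s"
proof -
  obtain \<rho> where f: "f \<in> borel_measurable m" "Lp_norm_ereal m p f < \<infinity>"
    and \<rho>: "p_weak_ug \<mu> m p \<Gamma>s f \<rho>" "Lp_norm_enn m p \<rho> < \<infinity>"
    using assms unfolding N1p_tilde_def by blast
  have "Lp_norm_enn m p (\<lambda>x. ennreal \<bar>c\<bar> * \<rho> x) < \<infinity>"
    using \<rho> by (simp add: Lp_norm_enn_cmult p_pos p_weak_ug_measurable ennreal_mult_less_top)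
  moreover have "Lp_norm_ereal m p (\<lambda>x. ereal c * f x) < \<infinity>"
    using f by (simp add: Lp_norm_ereal_cmult ennreal_mult_less_top)
  moreover have "(\<lambda>x. ereal c * f x) \<in> borel_measurable m"
    using f by measurable
  ultimately show ?thesis
    unfolding N1p_tilde_def using p_weak_ug_cmult[OF \<rho>(1), of c] by blast
qed

lemma N1p_tilde_dominated:
  assumes h: "h \<in> borel_measurable m"
    and h1: "h1 \<in> N1p_tilde \<mu> m p \<Gamma>s" and h2: "h2 \<in> N1p_tilde \<mu> m p \<Gamma>s"
    and le: "\<And>x. \<bar>h x\<bar> \<le> \<bar>h1 x\<bar> + \<bar>h2 x\<bar>"
    and add: "\<And>z. \<bar>h1 z\<bar> \<noteq> \<infinity> \<Longrightarrow> \<bar>h2 z\<bar> \<noteq> \<infinity> \<Longrightarrow> h z = h1 z + h2 z"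
  shows "h \<in> N1p_tilde \<mu> m p \<Gamma>s"
proof -
  obtain \<rho>1 where f1: "h1 \<in> borel_measurable m" "Lp_norm_ereal m p h1 < \<infinity>"
    and r1: "p_weak_ug \<mu> m p \<Gamma>s h1 \<rho>1" "Lp_norm_enn m p \<rho>1 < \<infinity>"
    using h1 unfolding N1p_tilde_def by blast
  obtain \<rho>2 where f2: "h2 \<in> borel_measurable m" "Lp_norm_ereal m p h2 < \<infinity>"
    and r2: "p_weak_ug \<mu> m p \<Gamma>s h2 \<rho>2" "Lp_norm_enn m p \<rho>2 < \<infinity>"
    using h2 unfolding N1p_tilde_def by blast
  have "Lp_norm_ereal m p h \<le> Lp_norm_ereal m p h1 + Lp_norm_ereal m p h2"
    using f1 f2 le by (intro Lp_norm_ereal_le_add)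
  also have "\<dots> < \<infinity>"
    using f1 f2 by simp
  finally have "Lp_norm_ereal m p h < \<infinity>" .
  moreover have "Lp_norm_enn m p (\<lambda>x. \<rho>1 x + \<rho>2 x) \<le> Lp_norm_enn m p \<rho>1 + Lp_norm_enn m p \<rho>2"
    using r1 r2 by (intro Lp_norm_enn_add_le p p_weak_ug_measurable)
  then have "Lp_norm_enn m p (\<lambda>x. \<rho>1 x + \<rho>2 x) < \<infinity>"
    using r1 r2 by (simp add: le_less_trans)
  ultimately show ?thesis
    unfolding N1p_tilde_def using h p_weak_ug_add[OF r1(1) r2(1) add] by blast
qed

end

section \<open>Completeness\<close>

lemma ereal_abs_diff_finiteD: "\<bar>a - b\<bar> \<noteq> (\<infinity>::ereal) \<Longrightarrow> \<bar>a\<bar> \<noteq> \<infinity> \<and> \<bar>b\<bar> \<noteq> \<infinity>"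
  by (cases a; cases b) auto

text \<open>The limit \<open>f\<close> is the sum of the telescoping series \<open>v 0 + \<Sum>\<^sub>k d k\<close>, which converges
  absolutely outside the \<open>m\<close>-null set \<open>E\<close>; on \<open>E\<close>, \<open>f\<close> and the real increments \<open>w k\<close> are
  set to \<open>0\<close>.\<close>

locale fast_cauchy_seq = newton_sobolev +
  fixes v :: "nat \<Rightarrow> 'a \<Rightarrow> ereal" and R :: "nat \<Rightarrow> 'a \<Rightarrow> ennreal"
  assumes v_in_N1p_tilde: "\<And>k. v k \<in> N1p_tilde \<mu> m p \<Gamma>s"
    and R_p_weak_ug: "\<And>k. p_weak_ug \<mu> m p \<Gamma>s (\<lambda>x. v (Suc k) x - v k x) (R k)"
    and Lp_norm_R: "\<And>k. Lp_norm_enn m p (R k) \<le> ennreal ((1/2)^k)"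
    and Lp_norm_d: "\<And>k. Lp_norm_ereal m p (\<lambda>x. v (Suc k) x - v k x) \<le> ennreal ((1/2)^k)"
begin

definition d :: "nat \<Rightarrow> 'a \<Rightarrow> ereal" where
  "d k x = v (Suc k) x - v k x"
definition a :: "nat \<Rightarrow> 'a \<Rightarrow> ennreal" where
  "a k x = e2ennreal \<bar>d k x\<bar>"
definition S :: "'a \<Rightarrow> ennreal" where
  "S x = (\<Sum>k. a k x)"
definition E :: "'a set" where
  "E = {x. S x = top}"
definition w :: "nat \<Rightarrow> 'a \<Rightarrow> real" where
  "w k x = (if S x = top then 0 else real_of_ereal (d k x))"
definition f_real :: "'a \<Rightarrow> real" where
  "f_real x = (if S x = top then 0 else real_of_ereal (v 0 x)) + (\<Sum>k. w k x)"
definition f :: "'a \<Rightarrow> ereal" where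
  "f x = ereal (f_real x)"
definition R_tail :: "nat \<Rightarrow> 'a \<Rightarrow> ennreal" where
  "R_tail k x = (\<Sum>i. R (i + k) x)"

lemma v_measurable: "v k \<in> borel_measurable borel"
  using v_in_N1p_tilde[of k] unfolding N1p_tilde_def by (auto simp: measurable_m_iff_borel)

lemma d_measurable: "d k \<in> borel_measurable borel"
  unfolding d_def using v_measurable by measurable

lemma a_measurable: "a k \<in> borel_measurable borel"
  unfolding a_def using d_measurable by measurable

lemma S_measurable: "S \<in> borel_measurable borel"
  unfolding S_def using a_measurable by measurable

lemma E_sets: "E \<in> sets borel"
proof -
  have "{x \<in> space borel. S x = top} \<in> sets borel"
    using S_measurable by measurable
  then show ?thesis by (simp add: E_def)
qed

lemma w_measurable: "w k \<in> borel_measurable borel"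
  unfolding w_def using S_measurable d_measurable by measurable

lemma R_measurable: "R k \<in> borel_measurable borel"
  using R_p_weak_ug[of k] by (simp add: p_weak_ug_iff_null_paths)

lemma R_tail_measurable: "R_tail k \<in> borel_measurable borel"
  unfolding R_tail_def using R_measurable by measurable

lemma Lp_norm_a_tail: "Lp_norm_enn m p (\<lambda>x. \<Sum>i. a (i + k) x) \<le> ennreal (2 * (1/2)^k)"
  using Lp_norm_d unfolding Lp_norm_ereal_def a_def d_def
  by (intro Lp_norm_enn_suminf_geometric_le p borel_measurable_m a_measurable[unfolded a_def d_def])

lemma Lp_norm_R_tail: "Lp_norm_enn m p (R_tail k) \<le> ennreal (2 * (1/2)^k)"
  unfolding R_tail_def by (intro Lp_norm_enn_suminf_geometric_le p borel_measurable_m R_measurable Lp_norm_R)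

lemma E_null: "E \<in> null_sets m"
proof -
  have "Lp_norm_enn m p S < top"
    using Lp_norm_a_tail[of 0] unfolding S_def by (simp add: le_less_trans)
  then have "AE x in m. S x < top"
    using Lp_norm_enn_finite_AE[OF p_pos] S_measurable borel_measurable_m by auto
  moreover have "{x \<in> space m. \<not> S x < top} = E"
    unfolding space_m E_def using top.not_eq_extremum by blast
  ultimately show ?thesis
    using AE_iff_measurable[of E m "\<lambda>x. S x < top"] E_sets sets_m by auto
qed

lemma d_finite:
  assumes "x \<notin> E"
  shows "\<bar>d k x\<bar> \<noteq> \<infinity>"
proof
  assume "\<bar>d k x\<bar> = \<infinity>"
  then have "a k x = top"
    unfolding a_def by simp
  moreover have "a k x \<le> S x"
    unfolding S_def by (rule ennreal_le_suminf)
  ultimately show False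
    using assms by (simp add: E_def top_unique)
qed

lemma v_finite:
  assumes "x \<notin> E"
  shows "\<bar>v k x\<bar> \<noteq> \<infinity>"
proof -
  have "\<bar>v (Suc j) x\<bar> \<noteq> \<infinity> \<and> \<bar>v j x\<bar> \<noteq> \<infinity>" for j
    using d_finite[OF assms, of j] unfolding d_def by (rule ereal_abs_diff_finiteD)
  then show ?thesis
    by (cases k) auto
qed

lemma d_eq_w:
  assumes "x \<notin> E"
  shows "d k x = ereal (w k x)"
  using assms d_finite[OF assms, of k] by (simp add: w_def E_def ereal_real')

lemma a_eq_w: "x \<notin> E \<Longrightarrow> a k x = ennreal \<bar>w k x\<bar>"
  by (simp add: a_def d_eq_w)

lemma summable_abs_w: "summable (\<lambda>k. \<bar>w k x\<bar>)"
proof (cases "x \<in> E")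
  case True
  then show ?thesis by (simp add: w_def E_def)
next
  case False
  then have "(\<Sum>k. ennreal \<bar>w k x\<bar>) \<noteq> top"
    using a_eq_w[OF False] by (simp add: S_def E_def)
  then show ?thesis
    by (rule summable_suminf_not_top[OF abs_ge_zero])
qed

lemma summable_abs_w_shift: "summable (\<lambda>i. \<bar>w (i + k) x\<bar>)"
  using summable_abs_w[of x] by (subst summable_iff_shift[of "\<lambda>i. \<bar>w i x\<bar>" k])

lemma v_eq_partial_sum:
  assumes "x \<notin> E"
  shows "real_of_ereal (v k x) = real_of_ereal (v 0 x) + (\<Sum>i<k. w i x)"
proof (induction k)
  case (Suc k)
  have "w k x = real_of_ereal (v (Suc k) x) - real_of_ereal (v k x)"
    using d_eq_w[OF assms, of k] v_finite[OF assms, of k] v_finite[OF assms, of "Suc k"]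
    by (auto simp: d_def real_of_ereal_minus)
  with Suc show ?case by simp
qed simp

lemma v_minus_f_eq:
  assumes "x \<notin> E"
  shows "v k x - f x = ereal (- (\<Sum>i. w (i + k) x))"
proof -
  have "f_real x - real_of_ereal (v k x) = (\<Sum>i. w (i + k) x)"
    using assms v_eq_partial_sum[OF assms, of k]
      suminf_minus_initial_segment[OF summable_rabs_cancel[OF summable_abs_w], of k]
    by (simp add: f_real_def E_def)
  then show ?thesis
    using v_finite[OF assms, of k] by (cases "v k x") (auto simp: f_def)
qed

lemma f_real_measurable: "f_real \<in> borel_measurable borel"
proof -
  have "(\<lambda>x. \<Sum>k. w k x) \<in> borel_measurable borel"
  proof (rule borel_measurable_LIMSEQ_real)
    show "(\<lambda>n. \<Sum>k<n. w k x) \<longlonglongrightarrow> (\<Sum>k. w k x)" for x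
      using summable_rabs_cancel[OF summable_abs_w] by (rule summable_LIMSEQ)
  qed (use w_measurable in auto)
  moreover have "{x \<in> space borel. S x = top} \<in> sets borel"
    using S_measurable by measurable
  moreover have "(\<lambda>x. real_of_ereal (v 0 x)) \<in> borel_measurable borel"
    using v_measurable by measurable
  ultimately show ?thesis
    unfolding f_real_def by (intro borel_measurable_add measurable_If) auto
qed

lemma f_measurable: "f \<in> borel_measurable borel"
  unfolding f_def using f_real_measurable by measurable

lemma Lp_norm_v_minus_f: "Lp_norm_ereal m p (\<lambda>x. v k x - f x) \<le> ennreal (2 * (1/2)^k)"
proof -
  have "e2ennreal \<bar>v k x - f x\<bar> \<le> (\<Sum>i. a (i + k) x)" if x: "x \<notin> E" for x
  proof -
    have "e2ennreal \<bar>v k x - f x\<bar> = ennreal \<bar>\<Sum>i. w (i + k) x\<bar>"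
      using v_minus_f_eq[OF x, of k] by simp
    also have "\<dots> \<le> ennreal (\<Sum>i. \<bar>w (i + k) x\<bar>)"
      by (intro ennreal_leI summable_rabs summable_abs_w_shift)
    also have "\<dots> = (\<Sum>i. a (i + k) x)"
      using a_eq_w[OF x] by (simp add: suminf_ennreal2 summable_abs_w_shift)
    finally show ?thesis .
  qed
  then have "Lp_norm_ereal m p (\<lambda>x. v k x - f x) \<le> Lp_norm_enn m p (\<lambda>x. \<Sum>i. a (i + k) x)"
    unfolding Lp_norm_ereal_def using AE_not_in[OF E_null]
    by (intro Lp_norm_enn_mono_AE p_pos) (auto elim!: eventually_mono)
  also have "\<dots> \<le> ennreal (2 * (1/2)^k)"
    by (rule Lp_norm_a_tail)
  finally show ?thesis .
qed

definition ug_fails :: "nat \<Rightarrow> 'a path_triple set" where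
  "ug_fails k = {P\<in>\<Gamma>s. \<not> ug_ineq (d k) (start3 P) (end3 P) (path_int \<mu> P (R k))}"
definition ug_fails_on_subpath :: "nat \<Rightarrow> 'a path_triple set" where
  "ug_fails_on_subpath k = {P\<in>\<Gamma>s. \<exists>Q\<in>ug_fails k. path_image3 Q \<subseteq> path_image3 P}"
definition R_tail_infinite :: "'a path_triple set" where
  "R_tail_infinite = {P\<in>\<Gamma>s. path_int \<mu> P (R_tail 0) = top}"
definition meets_E :: "'a path_triple set" where
  "meets_E = {P\<in>\<Gamma>s. emeasure \<mu> (path_image3 P \<inter> E) \<noteq> 0}"
definition bad_paths :: "'a path_triple set" where
  "bad_paths = (\<Union>k. ug_fails_on_subpath k) \<union> R_tail_infinite \<union> meets_E"

lemma null_ug_fails_on_subpath: "null_paths (ug_fails_on_subpath k)"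
proof (rule null_paths_superpaths)
  show "null_paths (ug_fails k)"
    using R_p_weak_ug[of k] unfolding p_weak_ug_iff_null_paths ug_fails_def d_def[abs_def] by simp
qed (auto simp: ug_fails_on_subpath_def)

lemma null_R_tail_infinite: "null_paths R_tail_infinite"
proof -
  have "Lp_norm_enn m p (R_tail 0) < top"
    using Lp_norm_R_tail[of 0] by (simp add: le_less_trans)
  then show ?thesis
    unfolding null_paths_def R_tail_infinite_def using R_tail_measurable by blast
qed

text \<open>\<open>E\<close> is only \<open>m\<close>-null, but the function \<open>\<infinity>\<close> on \<open>E\<close> has \<open>L\<^sup>p(m)\<close> norm zero and infinite
  integral along every path meeting \<open>E\<close> in positive \<open>\<mu>\<close>-measure.\<close>

lemma null_meets_E: "null_paths meets_E"
proof -
  define g where "g x = (top::ennreal) * indicator E x" for x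
  have g: "g \<in> borel_measurable borel"
    unfolding g_def using E_sets by measurable
  have "(\<integral>\<^sup>+x. enn_powr (g x) p \<partial>m) = (\<integral>\<^sup>+x. top * indicator E x \<partial>m)"
    by (intro nn_integral_cong) (simp add: g_def split: split_indicator)
  also have "\<dots> = top * emeasure m E"
    using E_null by (intro nn_integral_cmult_indicator) auto
  also have "\<dots> = 0"
    using E_null by auto
  finally have "Lp_norm_enn m p g = 0"
    by (simp add: Lp_norm_enn_def)
  moreover have "path_int \<mu> P g = top" if P: "P \<in> meets_E" for P
  proof -
    have "path_image3 P \<inter> E \<in> sets \<mu>"
      using P path_image_sets E_sets sets_mu by (auto simp: meets_E_def)
    have "(\<lambda>x. g x * indicator (path_image3 P) x) = (\<lambda>x. top * indicator (path_image3 P \<inter> E) x)"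
      by (rule ext) (simp add: g_def split: split_indicator)
    then have "path_int \<mu> P g = top * emeasure \<mu> (path_image3 P \<inter> E)"
      unfolding path_int_def using \<open>path_image3 P \<inter> E \<in> sets \<mu>\<close> by (simp add: nn_integral_cmult_indicator)
    with P show ?thesis
      by (simp add: meets_E_def ennreal_top_mult)
  qed
  ultimately show ?thesis
    unfolding null_paths_def using g by (intro bexI[of _ g]) auto
qed

lemma null_bad_paths: "null_paths bad_paths"
  unfolding bad_paths_def
  by (intro null_paths_Un null_paths_UN null_ug_fails_on_subpath null_R_tail_infinite null_meets_E)
     (auto simp: ug_fails_on_subpath_def)

lemma path_int_R_tail_suminf: "P \<in> \<Gamma>s \<Longrightarrow> path_int \<mu> P (R_tail k) = (\<Sum>i. path_int \<mu> P (R (i + k)))"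
  unfolding R_tail_def using R_measurable by (intro path_int_suminf) auto

lemma good_path_subpath_ug:
  assumes P: "P \<in> \<Gamma>s" "P \<notin> bad_paths" and Q: "Q \<in> \<Gamma>s" "path_image3 Q \<subseteq> path_image3 P"
  shows "\<bar>d k (start3 Q)\<bar> \<noteq> \<infinity>" "\<bar>d k (end3 Q)\<bar> \<noteq> \<infinity>"
    "ennreal \<bar>real_of_ereal (d k (start3 Q)) - real_of_ereal (d k (end3 Q))\<bar> \<le> path_int \<mu> P (R k)"
proof -
  have "Q \<notin> ug_fails k"
    using P Q by (auto simp: bad_paths_def ug_fails_on_subpath_def)
  then have ug: "ug_ineq (d k) (start3 Q) (end3 Q) (path_int \<mu> Q (R k))"
    using Q by (simp add: ug_fails_def)
  have QP: "path_int \<mu> Q (R k) \<le> path_int \<mu> P (R k)"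
    using Q by (intro path_int_mono_image)
  have "path_int \<mu> P (R k) \<le> path_int \<mu> P (R_tail 0)"
    unfolding R_tail_def by (intro path_int_mono) (use ennreal_le_suminf in simp)
  also have "\<dots> < top"
    using P by (simp add: bad_paths_def R_tail_infinite_def less_top[symmetric])
  finally have "path_int \<mu> Q (R k) < top"
    using QP by (rule le_less_trans[rotated])
  from ug_ineqD[OF ug this] QP
  show "\<bar>d k (start3 Q)\<bar> \<noteq> \<infinity>" "\<bar>d k (end3 Q)\<bar> \<noteq> \<infinity>"
    "ennreal \<bar>real_of_ereal (d k (start3 Q)) - real_of_ereal (d k (end3 Q))\<bar> \<le> path_int \<mu> P (R k)"
    by auto
qed

lemma S_le_along_subpath:
  assumes P: "P \<in> \<Gamma>s" "P \<notin> bad_paths" and Q: "Q \<in> \<Gamma>s" "path_image3 Q \<subseteq> path_image3 P"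
    and ends: "{u, u'} = {start3 Q, end3 Q}"
  shows "S u' \<le> S u + path_int \<mu> P (R_tail 0)"
proof -
  have "a k u' \<le> a k u + path_int \<mu> P (R k)" for k
  proof -
    have fin: "\<bar>d k u\<bar> \<noteq> \<infinity>" "\<bar>d k u'\<bar> \<noteq> \<infinity>"
      and ug: "ennreal \<bar>real_of_ereal (d k u') - real_of_ereal (d k u)\<bar> \<le> path_int \<mu> P (R k)"
      using good_path_subpath_ug[OF P Q, of k] ends by (auto simp: doubleton_eq_iff abs_minus_commute)
    have a_eq: "a k y = ennreal \<bar>real_of_ereal (d k y)\<bar>" if "\<bar>d k y\<bar> \<noteq> \<infinity>" for y
      using that by (cases "d k y") (simp_all add: a_def)
    have "a k u' = ennreal \<bar>real_of_ereal (d k u')\<bar>"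
      using a_eq[OF fin(2)] .
    also have "\<dots> \<le> ennreal (\<bar>real_of_ereal (d k u)\<bar> + \<bar>real_of_ereal (d k u') - real_of_ereal (d k u)\<bar>)"
      by (intro ennreal_leI) linarith
    also have "\<dots> = ennreal \<bar>real_of_ereal (d k u)\<bar> + ennreal \<bar>real_of_ereal (d k u') - real_of_ereal (d k u)\<bar>"
      by (intro ennreal_plus abs_ge_zero)
    also have "\<dots> \<le> a k u + path_int \<mu> P (R k)"
      using a_eq[OF fin(1)] ug by (intro add_mono) simp_all
    finally show ?thesis .
  qed
  then have "S u' \<le> (\<Sum>k. a k u + path_int \<mu> P (R k))"
    unfolding S_def by (intro suminf_le) auto
  also have "\<dots> = S u + path_int \<mu> P (R_tail 0)"
    unfolding S_def using P(1) by (simp add: suminf_add path_int_R_tail_suminf)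
  finally show ?thesis .
qed

text \<open>A good path meets the complement of \<open>E\<close> (its image has positive \<open>\<mu>\<close>-measure); the
  subpath from such a point to either endpoint then carries finiteness of \<open>S\<close> to the endpoint.\<close>

lemma good_path_meets_complement_E:
  assumes "(a0, b0, \<gamma>) \<in> \<Gamma>s" "(a0, b0, \<gamma>) \<notin> bad_paths"
  obtains t where "a0 \<le> t" "t \<le> b0" "\<gamma> t \<notin> E"
proof -
  have "0 < emeasure \<mu> (\<gamma> ` {a0..b0})"
    using assms(1) paths_Gamma_mu by (auto simp: Gamma_mu_def)
  moreover have "emeasure \<mu> (\<gamma> ` {a0..b0} \<inter> E) = 0"
    using assms by (auto simp: bad_paths_def meets_E_def path_image3_def)
  ultimately have "\<not> \<gamma> ` {a0..b0} \<subseteq> E"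
    by (metis Int_absorb2 less_irrefl)
  then show ?thesis
    using that by (metis atLeastAtMost_iff image_subset_iff)
qed

lemma good_path_ends:
  assumes P: "P \<in> \<Gamma>s" "P \<notin> bad_paths"
  shows "start3 P \<notin> E" "end3 P \<notin> E"
proof -
  obtain a0 b0 \<gamma> where P_eq: "P = (a0, b0, \<gamma>)"
    by (cases P)
  obtain t where t: "a0 \<le> t" "t \<le> b0" "\<gamma> t \<notin> E"
    using good_path_meets_complement_E P unfolding P_eq by blast
  have im: "path_image3 P = \<gamma> ` {a0..b0}"
    by (simp add: P_eq path_image3_def)
  have R_fin: "path_int \<mu> P (R_tail 0) \<noteq> top"
    using P by (auto simp: bad_paths_def R_tail_infinite_def)
  have S_fin: "S u' \<noteq> top" if "a0 \<le> c" "c < e" "e \<le> b0" "{\<gamma> t, u'} = {\<gamma> c, \<gamma> e}" for c e u'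
  proof -
    have Q: "(c, e, \<gamma>) \<in> \<Gamma>s"
      using subpath_closed[of a0 b0 \<gamma> c e] P(1) that(1-3) by (simp add: P_eq)
    have "path_image3 (c, e, \<gamma>) \<subseteq> path_image3 P"
      unfolding im using that(1-3) by (auto simp: path_image3_def)
    from S_le_along_subpath[OF P Q this, of "\<gamma> t" u'] that(4)
    have "S u' \<le> S (\<gamma> t) + path_int \<mu> P (R_tail 0)"
      by (simp add: start3_def end3_def)
    with t(3) R_fin show ?thesis
      by (auto simp: E_def top_unique)
  qed
  have "S (\<gamma> a0) \<noteq> top"
  proof (cases "t = a0")
    case False
    then show ?thesis
      using S_fin[of a0 t "\<gamma> a0"] t by auto
  qed (use t in \<open>simp add: E_def\<close>)
  moreover have "S (\<gamma> b0) \<noteq> top"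
  proof (cases "t = b0")
    case False
    then show ?thesis
      using S_fin[of t b0 "\<gamma> b0"] t by auto
  qed (use t in \<open>simp add: E_def\<close>)
  ultimately show "start3 P \<notin> E" "end3 P \<notin> E"
    by (simp_all add: E_def P_eq start3_def end3_def)
qed

lemma good_path_ug_v_minus_f:
  assumes P: "P \<in> \<Gamma>s" "P \<notin> bad_paths"
  shows "ug_ineq (\<lambda>x. v k x - f x) (start3 P) (end3 P) (path_int \<mu> P (R_tail k))"
proof -
  let ?x = "start3 P" and ?y = "end3 P"
  have x: "?x \<notin> E" and y: "?y \<notin> E"
    using good_path_ends[OF P] by auto
  have w_le: "ennreal \<bar>w i ?y - w i ?x\<bar> \<le> path_int \<mu> P (R i)" for i
    using good_path_subpath_ug[OF P P(1) order_refl, of i] d_eq_w[OF x, of i] d_eq_w[OF y, of i]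
    by (simp add: abs_minus_commute)
  let ?D = "\<lambda>i. w (i + k) ?y - w (i + k) ?x"
  have sD: "summable (\<lambda>i. \<bar>?D i\<bar>)"
    by (rule summable_rabs_comparison_test[where g="\<lambda>i. \<bar>w (i + k) ?y\<bar> + \<bar>w (i + k) ?x\<bar>"])
       (auto intro: summable_add summable_abs_w_shift)
  have "(v k ?x - f ?x) - (v k ?y - f ?y) = ereal (\<Sum>i. ?D i)"
    using v_minus_f_eq[OF x, of k] v_minus_f_eq[OF y, of k]
      suminf_diff[OF summable_rabs_cancel[OF summable_abs_w_shift] summable_rabs_cancel[OF summable_abs_w_shift]]
    by simp
  moreover have "ennreal \<bar>\<Sum>i. ?D i\<bar> \<le> ennreal (\<Sum>i. \<bar>?D i\<bar>)"
    by (intro ennreal_leI summable_rabs sD)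
  moreover have "\<dots> = (\<Sum>i. ennreal \<bar>?D i\<bar>)"
    using sD by (simp add: suminf_ennreal2)
  moreover have "\<dots> \<le> path_int \<mu> P (R_tail k)"
    using w_le P(1) by (simp add: path_int_R_tail_suminf suminf_le)
  ultimately show ?thesis
    using v_minus_f_eq[OF x, of k] v_minus_f_eq[OF y, of k] by (intro ug_ineqI) auto
qed

lemma p_weak_ug_v_minus_f: "p_weak_ug \<mu> m p \<Gamma>s (\<lambda>x. v k x - f x) (R_tail k)"
proof -
  have "{P\<in>\<Gamma>s. \<not> ug_ineq (\<lambda>x. v k x - f x) (start3 P) (end3 P) (path_int \<mu> P (R_tail k))} \<subseteq> bad_paths"
    using good_path_ug_v_minus_f by blast
  then show ?thesis
    unfolding p_weak_ug_iff_null_paths using R_tail_measurable null_bad_paths null_paths_subset by blast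
qed

lemma N1p_norm_v_minus_f: "N1p_norm \<mu> m p \<Gamma>s (\<lambda>x. v k x - f x) \<le> ennreal (4 * (1/2)^k)"
proof -
  have "N1p_norm \<mu> m p \<Gamma>s (\<lambda>x. v k x - f x) \<le> Lp_norm_ereal m p (\<lambda>x. v k x - f x) + Lp_norm_enn m p (R_tail k)"
    by (rule N1p_norm_le[OF p_weak_ug_v_minus_f])
  also have "\<dots> \<le> ennreal (2 * (1/2)^k) + ennreal (2 * (1/2)^k)"
    by (intro add_mono Lp_norm_v_minus_f Lp_norm_R_tail)
  finally show ?thesis
    by (simp add: ennreal_plus[symmetric] del: ennreal_plus)
qed

lemma v_minus_f_in_N1p_tilde: "(\<lambda>x. v k x - f x) \<in> N1p_tilde \<mu> m p \<Gamma>s"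
proof -
  have "(\<lambda>x. v k x - f x) \<in> borel_measurable m"
    using v_measurable[of k] f_measurable by (intro borel_measurable_m) measurable
  moreover have "Lp_norm_ereal m p (\<lambda>x. v k x - f x) < top" "Lp_norm_enn m p (R_tail k) < top"
    using Lp_norm_v_minus_f[of k] Lp_norm_R_tail[of k] by (simp_all add: le_less_trans)
  ultimately show ?thesis
    unfolding N1p_tilde_def using p_weak_ug_v_minus_f by auto
qed

lemma f_in_N1p_tilde: "f \<in> N1p_tilde \<mu> m p \<Gamma>s"
proof (rule N1p_tilde_dominated)
  show "f \<in> borel_measurable m"
    using f_measurable by (rule borel_measurable_m)
  show "v 0 \<in> N1p_tilde \<mu> m p \<Gamma>s"
    by (rule v_in_N1p_tilde)
  show "(\<lambda>x. ereal (-1) * (v 0 x - f x)) \<in> N1p_tilde \<mu> m p \<Gamma>s"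
    by (rule N1p_tilde_cmult[OF v_minus_f_in_N1p_tilde])
  have f_fin: "\<bar>f x\<bar> \<noteq> \<infinity>" for x
    by (simp add: f_def)
  show "\<bar>f x\<bar> \<le> \<bar>v 0 x\<bar> + \<bar>ereal (-1) * (v 0 x - f x)\<bar>" for x
    using f_fin[of x] by (cases "v 0 x"; cases "f x") simp_all
  show "f x = v 0 x + ereal (-1) * (v 0 x - f x)" if "\<bar>v 0 x\<bar> \<noteq> \<infinity>" for x
    using f_fin[of x] that by (cases "v 0 x"; cases "f x") simp_all
qed

end

lemma ennreal_tendsto_0_geometric:
  fixes x :: "nat \<Rightarrow> ennreal"
  assumes "\<And>k. \<exists>N. \<forall>i\<ge>N. x i \<le> ennreal (c * (1/2)^k)"
  shows "x \<longlonglongrightarrow> 0"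
proof (rule order_tendsto_iff[THEN iffD2], intro conjI allI impI)
  fix u :: ennreal
  assume "0 < u"
  then obtain e where e: "0 < e" "ennreal e \<le> u"
  proof (cases u)
    case (real r)
    with \<open>0 < u\<close> show ?thesis
      by (intro that[of r]) auto
  qed (auto intro: that[of 1])
  have "(\<lambda>k. c * (1/2::real)^k) \<longlonglongrightarrow> 0"
    by (intro tendsto_mult_right_zero LIMSEQ_power_zero) simp
  from order_tendstoD(2)[OF this e(1)] obtain k where "c * (1/2)^k < e"
    by (auto simp: eventually_sequentially)
  moreover obtain N where "\<forall>i\<ge>N. x i \<le> ennreal (c * (1/2)^k)"
    using assms by blast
  ultimately have "\<forall>i\<ge>N. x i < u"
    using e by (metis ennreal_lessI le_less_trans order_less_le_trans)
  then show "\<forall>\<^sub>F i in sequentially. x i < u"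
    by (auto simp: eventually_sequentially)
qed simp

context newton_sobolev
begin

lemma p_weak_ug_below_N1p_norm:
  assumes "N1p_norm \<mu> m p \<Gamma>s f < ennreal r"
  shows "Lp_norm_ereal m p f \<le> ennreal r"
    and "\<exists>\<rho>. p_weak_ug \<mu> m p \<Gamma>s f \<rho> \<and> Lp_norm_enn m p \<rho> \<le> ennreal r"
proof -
  have "Lp_norm_ereal m p f \<le> N1p_norm \<mu> m p \<Gamma>s f"
    and INF_le: "(INF \<rho>\<in>{\<rho>. p_weak_ug \<mu> m p \<Gamma>s f \<rho>}. Lp_norm_enn m p \<rho>) \<le> N1p_norm \<mu> m p \<Gamma>s f"
    unfolding N1p_norm_def by simp_all
  with assms show "Lp_norm_ereal m p f \<le> ennreal r"
    by simp
  from INF_le assms have "(INF \<rho>\<in>{\<rho>. p_weak_ug \<mu> m p \<Gamma>s f \<rho>}. Lp_norm_enn m p \<rho>) < ennreal r"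
    by (rule le_less_trans)
  then show "\<exists>\<rho>. p_weak_ug \<mu> m p \<Gamma>s f \<rho> \<and> Lp_norm_enn m p \<rho> \<le> ennreal r"
    unfolding INF_less_iff by (auto intro: less_imp_le)
qed

lemma N1p_complete:
  assumes F: "\<And>n. F n \<in> N1p_tilde \<mu> m p \<Gamma>s"
    and Cauchy: "\<forall>\<epsilon>>0. \<exists>N. \<forall>i\<ge>N. \<forall>j\<ge>N. N1p_norm \<mu> m p \<Gamma>s (\<lambda>x. F i x - F j x) < ennreal \<epsilon>"
  shows "\<exists>f\<in>N1p_tilde \<mu> m p \<Gamma>s. (\<lambda>n. N1p_norm \<mu> m p \<Gamma>s (\<lambda>x. F n x - f x)) \<longlonglongrightarrow> 0"
proof -
  have "\<forall>k::nat. \<exists>N. \<forall>i\<ge>N. \<forall>j\<ge>N. N1p_norm \<mu> m p \<Gamma>s (\<lambda>x. F i x - F j x) < ennreal ((1/2)^k)"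
    using Cauchy by simp
  then obtain N where N: "\<And>k i j. N k \<le> i \<Longrightarrow> N k \<le> j \<Longrightarrow>
      N1p_norm \<mu> m p \<Gamma>s (\<lambda>x. F i x - F j x) < ennreal ((1/2)^k)"
    by metis
  define n where "n k = (\<Sum>i\<le>k. N i)" for k
  have n_ge: "N k \<le> n k" "n k \<le> n (Suc k)" for k
    unfolding n_def by (auto intro: member_le_sum)
  define v where "v k = F (n k)" for k
  have small: "N1p_norm \<mu> m p \<Gamma>s (\<lambda>x. v (Suc k) x - v k x) < ennreal ((1/2)^k)" for k
    unfolding v_def using n_ge(1)[of k] n_ge(2)[of k] by (intro N) auto
  obtain R where "\<And>k. p_weak_ug \<mu> m p \<Gamma>s (\<lambda>x. v (Suc k) x - v k x) (R k)"
    "\<And>k. Lp_norm_enn m p (R k) \<le> ennreal ((1/2)^k)"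
    using p_weak_ug_below_N1p_norm(2)[OF small] by metis
  with F p_weak_ug_below_N1p_norm(1)[OF small]
  interpret fast_cauchy_seq \<mu> m p \<Gamma>s v R
    by unfold_locales (simp_all add: v_def)
  have "N1p_norm \<mu> m p \<Gamma>s (\<lambda>x. F i x - f x) \<le> ennreal (5 * (1/2)^k)" if i: "n k \<le> i" for i k
  proof -
    have "N1p_norm \<mu> m p \<Gamma>s (\<lambda>x. F i x - f x) \<le>
          N1p_norm \<mu> m p \<Gamma>s (\<lambda>x. F i x - v k x) + N1p_norm \<mu> m p \<Gamma>s (\<lambda>x. v k x - f x)"
      using F[of i] v_in_N1p_tilde[of k] f_in_N1p_tilde
      by (intro N1p_norm_diff_triangle) (auto simp: N1p_tilde_def)
    also have "\<dots> \<le> ennreal ((1/2)^k) + ennreal (4 * (1/2)^k)"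
    proof (rule add_mono)
      show "N1p_norm \<mu> m p \<Gamma>s (\<lambda>x. F i x - v k x) \<le> ennreal ((1/2)^k)"
        unfolding v_def using N[of k i "n k"] n_ge(1)[of k] i by simp
    qed (rule N1p_norm_v_minus_f)
    finally show ?thesis
      by (simp add: ennreal_plus[symmetric] del: ennreal_plus)
  qed
  then have "(\<lambda>i. N1p_norm \<mu> m p \<Gamma>s (\<lambda>x. F i x - f x)) \<longlonglongrightarrow> 0"
    by (intro ennreal_tendsto_0_geometric) auto
  then show ?thesis
    using f_in_N1p_tilde by blast
qed

end

theorem theorem4p3:
  fixes \<mu> m :: "'a::metric_space measure" and p :: real and \<Gamma>s :: "'a path_triple set"
  assumes sets_mu: "sets \<mu> = sets borel"
    and nonatomic: "\<And>x. emeasure \<mu> {x} = 0"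
    and sets_m: "sets m = sets borel"
    and p: "1 \<le> p"
    and sub: "\<Gamma>s \<subseteq> Gamma_mu \<mu>"
    and subpath_closed: "\<And>a b g c e. (a, b, g) \<in> \<Gamma>s \<Longrightarrow> a \<le> c \<Longrightarrow> c < e \<Longrightarrow> e \<le> b
                           \<Longrightarrow> (c, e, g) \<in> \<Gamma>s"
    and joined: "\<And>x y. x \<noteq> y \<Longrightarrow> \<exists>P\<in>\<Gamma>s. start3 P = x \<and> end3 P = y"
  shows "(\<lambda>x. 0) \<in> N1p_tilde \<mu> m p \<Gamma>s
    \<and> (\<forall>f\<in>N1p_tilde \<mu> m p \<Gamma>s. \<forall>c::real.
          (\<lambda>x. ereal c * f x) \<in> N1p_tilde \<mu> m p \<Gamma>s
        \<and> N1p_norm \<mu> m p \<Gamma>s (\<lambda>x. ereal c * f x) = ennreal \<bar>c\<bar> * N1p_norm \<mu> m p \<Gamma>s f)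
    \<and> (\<forall>f\<in>N1p_tilde \<mu> m p \<Gamma>s. \<forall>g\<in>N1p_tilde \<mu> m p \<Gamma>s.
          (\<lambda>x. f x + g x) \<in> N1p_tilde \<mu> m p \<Gamma>s
        \<and> N1p_norm \<mu> m p \<Gamma>s (\<lambda>x. f x + g x) \<le> N1p_norm \<mu> m p \<Gamma>s f + N1p_norm \<mu> m p \<Gamma>s g)
    \<and> (\<forall>F::nat \<Rightarrow> 'a \<Rightarrow> ereal. (\<forall>n. F n \<in> N1p_tilde \<mu> m p \<Gamma>s) \<longrightarrow>
          (\<forall>\<epsilon>>0. \<exists>N. \<forall>i\<ge>N. \<forall>j\<ge>N. N1p_norm \<mu> m p \<Gamma>s (\<lambda>x. F i x - F j x) < ennreal \<epsilon>) \<longrightarrow>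
          (\<exists>f\<in>N1p_tilde \<mu> m p \<Gamma>s. (\<lambda>n. N1p_norm \<mu> m p \<Gamma>s (\<lambda>x. F n x - f x)) \<longlonglongrightarrow> 0))"
proof -
  interpret newton_sobolev \<mu> m p \<Gamma>s
    using sets_mu sets_m p sub subpath_closed by unfold_locales blast+
  have meas: "f \<in> borel_measurable m" if "f \<in> N1p_tilde \<mu> m p \<Gamma>s" for f
    using that by (simp add: N1p_tilde_def)
  have add: "(\<lambda>x. f x + g x) \<in> N1p_tilde \<mu> m p \<Gamma>s
      \<and> N1p_norm \<mu> m p \<Gamma>s (\<lambda>x. f x + g x) \<le> N1p_norm \<mu> m p \<Gamma>s f + N1p_norm \<mu> m p \<Gamma>s g"
    if "f \<in> N1p_tilde \<mu> m p \<Gamma>s" "g \<in> N1p_tilde \<mu> m p \<Gamma>s" for f g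
    using that meas[OF that(1)] meas[OF that(2)]
    by (auto intro: N1p_tilde_dominated N1p_norm_le_add ereal_abs_add)
  show ?thesis
    using N1p_tilde_zero N1p_tilde_cmult N1p_norm_cmult meas add N1p_complete by blast
qed

end
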